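(* Let $G=G_0=(V,E)$ be an infinite, connected, quasi-transitive, cubic graph with fundamental domain $W$, let $X\subseteq E$ be the set of edges incident to vertices of $W$, let $\phi$ be a local transformation and $G_1=\phi(G)$, in which the mid-edges of $E$ are regarded as mid-edges of $G_1$. Define, for $x>0$, \[ Z_0(x)=\sum_{\pi\in\Sigma_0}x^{|\pi|},\qquad Z_1^*(x)=\sum_{\pi\in\Sigma_1^*}x^{|\pi|}, \] where $\Sigma_0$ is the set of SAWs on $G_0$ starting at mid-edges of $X$, and $\Sigma_1^*$ is the set of SAWs on $G_1$ starting at mid-edges of $X$ and ending at mid-edges of $E$. Then $Z_0(g_\phi(x))=Z_1^*(x)$ for all $x>0$ (as identities in $[0,\infty]$). Moreover, letting $Z_1(x)=\sum_{\pi\in\Sigma_1}x^{|\pi|}$ with $\Sigma_1$ the set of SAWs on $G_1$ starting at mid-edges of $X_1$ (the edges of $G_1$ incident to vertices of the gadgets $\phi(v)$, $v\in W$), one has $Z_1(x)<\infty$ if and only if $Z_1^*(x)<\infty$.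
   Context: All graphs are simple (no loops, no multiple edges). A graph $G=(V,E)$ is quasi-transitive if there is a finite $W\subseteq V$ such that every vertex is mapped into $W$ by some automorphism of $G$ (such $W$ is a fundamental domain); it is cubic if every vertex has degree $3$. Local transformation: a local transformation $\phi$ acts at a degree-$3$ vertex $v$ of a simple graph by replacing $v$ with a finite connected graph (the gadget) $\phi(v)$ having three distinct distinguished outer vertices (ports) $w_1,w_2,w_3$, each port being attached to exactly one of the three edges formerly incident to $v$ (one port per edge). It is required that (i) all gadgets $\phi(v)$ are isomorphic via isomorphisms sending ports to ports, and (ii) some subgroup of the automorphism group of $\phi(v)$ preserves the set $\{w_1,w_2,w_3\}$ and acts transitively on it. $\phi(G)$ denotes the graph obtained by applying $\phi$ at every degree-$3$ vertex of $G$. Mid-edge convention: each edge $e$ is identified with a point at its middle (also denoted $e$). Walks may start and end at mid-edges; such a walk is self-avoiding (a SAW) if it visits no vertex and no mid-edge more than once, and its length $|\pi|$ is the number of vertices it visits. Gadget series: for a degree-$3$ vertex $v$ with incident edges $e_1,e_2,e_3$, $g(x)=g_\phi(x)=\sum_{\pi}x^{|\pi|}$, where the sum is over all SAWs $\pi$ that start at the mid-edge of $e_1$, end at the mid-edge of $e_2$, and otherwise visit only vertices of the gadget $\phi(v)$. This polynomial does not depend on $v$ nor on the chosen pair of incident edges. *)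

theory Defs
  imports "HOL-Analysis.Analysis" "HOL-Algebra.Bij"
begin

definition simple_graph :: "'a set \<Rightarrow> 'a set set \<Rightarrow> bool" where
  "simple_graph V E \<longleftrightarrow> (\<forall>e\<in>E. \<exists>u v. u \<in> V \<and> v \<in> V \<and> u \<noteq> v \<and> e = {u, v})"

definition adj :: "'a set set \<Rightarrow> 'a \<Rightarrow> 'a \<Rightarrow> bool" where
  "adj E u v \<longleftrightarrow> {u, v} \<in> E"

definition connected_graph :: "'a set \<Rightarrow> 'a set set \<Rightarrow> bool" where
  "connected_graph V E \<longleftrightarrow> V \<noteq> {} \<and> (\<forall>u\<in>V. \<forall>v\<in>V. (adj E)\<^sup>*\<^sup>* u v)"

definition incident_edges :: "'a set set \<Rightarrow> 'a \<Rightarrow> 'a set set" where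
  "incident_edges E v = {e \<in> E. v \<in> e}"

definition cubic :: "'a set \<Rightarrow> 'a set set \<Rightarrow> bool" where
  "cubic V E \<longleftrightarrow> (\<forall>v\<in>V. card (incident_edges E v) = 3)"

definition graph_automorphism :: "'a set \<Rightarrow> 'a set set \<Rightarrow> ('a \<Rightarrow> 'a) \<Rightarrow> bool" where
  "graph_automorphism V E f \<longleftrightarrow> bij_betw f V V \<and>
     (\<forall>u\<in>V. \<forall>w\<in>V. {u, w} \<in> E \<longleftrightarrow> {f u, f w} \<in> E)"

text \<open>W is a fundamental domain: finite, and every vertex is mapped into W by an automorphism.
  (G is quasi-transitive iff such a W exists.)\<close>
definition fundamental_domain :: "'a set \<Rightarrow> 'a set set \<Rightarrow> 'a set \<Rightarrow> bool" where
  "fundamental_domain V E W \<longleftrightarrow> finite W \<and> W \<subseteq> V \<and>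
     (\<forall>v\<in>V. \<exists>f. graph_automorphism V E f \<and> f v \<in> W)"

text \<open>A walk from mid-edge e through the vertices vs (in order) to mid-edge f.
  Its length is the number of vertices visited, i.e. length vs.\<close>

definition walk_edges :: "'a list \<Rightarrow> 'a set list" where
  "walk_edges vs = map (\<lambda>i. {vs ! i, vs ! Suc i}) [0..<length vs - 1]"

definition saw :: "'a set set \<Rightarrow> 'a set \<Rightarrow> 'a list \<Rightarrow> 'a set \<Rightarrow> bool" where
  "saw E e vs f \<longleftrightarrow> e \<in> E \<and> f \<in> E \<and> distinct vs \<and>
     (vs = [] \<longrightarrow> e = f) \<and>
     (vs \<noteq> [] \<longrightarrow> hd vs \<in> e \<and> last vs \<in> f \<and> set (walk_edges vs) \<subseteq> E \<and>
        distinct (e # walk_edges vs @ [f]))"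

definition saw_gen :: "'a set set \<Rightarrow> ('a set \<times> 'a list \<times> 'a set) set" where
  "saw_gen E = {(e, vs, f). saw E e vs f}"

definition walk_series :: "('a set \<times> 'a list \<times> 'a set) set \<Rightarrow> real \<Rightarrow> ennreal" where
  "walk_series S x = (\<Sum>\<^sub>\<infinity>\<pi>\<in>S. ennreal x ^ length (fst (snd \<pi>)))"

definition gadget :: "'g set \<Rightarrow> 'g set set \<Rightarrow> 'g \<Rightarrow> 'g \<Rightarrow> 'g \<Rightarrow> bool" where
  "gadget K EH w1 w2 w3 \<longleftrightarrow> finite K \<and> simple_graph K EH \<and> connected_graph K EH \<and>
     w1 \<in> K \<and> w2 \<in> K \<and> w3 \<in> K \<and> w1 \<noteq> w2 \<and> w1 \<noteq> w3 \<and> w2 \<noteq> w3 \<and>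
     (\<exists>\<Gamma>. subgroup \<Gamma> (BijGroup K) \<and>
        (\<forall>\<gamma>\<in>\<Gamma>. graph_automorphism K EH \<gamma> \<and> \<gamma> ` {w1, w2, w3} = {w1, w2, w3}) \<and>
        (\<forall>p\<in>{w1, w2, w3}. \<forall>q\<in>{w1, w2, w3}. \<exists>\<gamma>\<in>\<Gamma>. \<gamma> p = q))"

definition port_assignment ::
  "'v set \<Rightarrow> 'v set set \<Rightarrow> 'g set \<Rightarrow> ('v \<Rightarrow> 'v set \<Rightarrow> 'g) \<Rightarrow> bool" where
  "port_assignment V E P port \<longleftrightarrow> (\<forall>v\<in>V. bij_betw (port v) (incident_edges E v) P)"

text \<open>The graph \<phi>(G): vertex v is replaced by the copy {v} \<times> K of the gadget; the edge
  e = {u,v} of G becomes the edge joining (u, port u e) and (v, port v e).\<close>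
definition lt_vertices :: "'v set \<Rightarrow> 'g set \<Rightarrow> ('v \<times> 'g) set" where
  "lt_vertices V K = V \<times> K"

definition lt_edge :: "('v \<Rightarrow> 'v set \<Rightarrow> 'g) \<Rightarrow> 'v set \<Rightarrow> ('v \<times> 'g) set" where
  "lt_edge port e = (\<lambda>u. (u, port u e)) ` e"

definition lt_edges ::
  "'v set \<Rightarrow> 'v set set \<Rightarrow> 'g set set \<Rightarrow> ('v \<Rightarrow> 'v set \<Rightarrow> 'g) \<Rightarrow> ('v \<times> 'g) set set" where
  "lt_edges V E EH port =
     {{(v, a), (v, b)} | v a b. v \<in> V \<and> {a, b} \<in> EH} \<union> lt_edge port ` E"

text \<open>The gadget series g_\<phi>(x): SAWs in \<phi>(G) from the mid-edge of e1 to the mid-edge of e2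
  (two distinct edges incident to a vertex v of G), visiting only vertices of \<phi>(v).
  Computed at some vertex v and some pair of incident edges (by the paper it does not
  depend on these choices).\<close>
definition gadget_series ::
  "'v set \<Rightarrow> 'v set set \<Rightarrow> 'g set \<Rightarrow> 'g set set \<Rightarrow> ('v \<Rightarrow> 'v set \<Rightarrow> 'g) \<Rightarrow> real \<Rightarrow> real" where
  "gadget_series V E K EH port x =
     (let v = (SOME v. v \<in> V);
          (e1, e2) = (SOME (e1, e2). e1 \<in> incident_edges E v \<and> e2 \<in> incident_edges E v \<and> e1 \<noteq> e2)
      in \<Sum>(e, vs, f) \<in> {(e, vs, f). saw (lt_edges V E EH port) e vs f \<and>
                            e = lt_edge port e1 \<and> f = lt_edge port e2 \<and> set vs \<subseteq> {v} \<times> K}.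
           x ^ length vs)"

end

(*
  A self-avoiding walk of \<phi>(G) between two mid-edges of G runs through a sequence of
  gadgets.  Recording which gadgets it crosses gives a self-avoiding walk \<pi> of G: a gadget has
  only three ports, so in a cubic graph it cannot be crossed twice.  Conversely \<pi> lifts back
  by choosing, independently for every vertex v of \<pi>, a walk inside \<phi>(v) between the ports
  of the two edges of \<pi> at v.  Reversal and the symmetries of the gadget give every pair of
  distinct ports the same generating function g(x), so summing over these choices turns the
  weight of \<pi> into g(x)^|\<pi>|.

  A walk of \<phi>(G) starting next to the fundamental domain either never visits a mid-edge of
  G, and then stays in one of finitely many gadgets, or it is a walk counted by Z_1^* with a
  prefix and a suffix inside single gadgets added.  There are boundedly many such prefixes and
  suffixes, each of at most |K| vertices, so Z_1(x) is at most a constant plus a constant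
  multiple of Z_1^*(x); the converse bound is inclusion.
*)
theory Submission
  imports Defs
begin

lemma split_first_block:
  assumes "xs \<noteq> []"
  obtains v ls ys where "xs = map (Pair v) ls @ ys" "ls \<noteq> []" "ys \<noteq> [] \<Longrightarrow> fst (hd ys) \<noteq> v"
proof -
  let ?v = "fst (hd xs)"
  let ?A = "takeWhile (\<lambda>q. fst q = ?v) xs" and ?B = "dropWhile (\<lambda>q. fst q = ?v) xs"
  have "map (Pair v) (map snd (takeWhile (\<lambda>q. fst q = v) ys)) = takeWhile (\<lambda>q. fst q = v) ys"
    for v :: 'a and ys :: "('a \<times> 'b) list"
    by (induction ys) auto
  then have "xs = map (Pair ?v) (map snd ?A) @ ?B" by simp
  moreover have "map snd ?A \<noteq> []" using assms by (cases xs) auto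
  moreover have "fst (hd ?B) \<noteq> ?v" if "?B \<noteq> []"
    using hd_dropWhile[OF that] .
  ultimately show thesis by (rule that)
qed

lemma map_Pair_append_eq_iff:
  assumes "v \<notin> fst ` set ys" "v \<notin> fst ` set ys'"
  shows "map (Pair v) ls @ ys = map (Pair v) ls' @ ys' \<longleftrightarrow> ls = ls' \<and> ys = ys'"
proof
  assume eq: "map (Pair v) ls @ ys = map (Pair v) ls' @ ys'"
  have take: "takeWhile (\<lambda>q. fst q = v) (map (Pair v) l @ zs) = map (Pair v) l"
    and drop: "dropWhile (\<lambda>q. fst q = v) (map (Pair v) l @ zs) = zs"
    if "v \<notin> fst ` set zs" for l zs
    using that by (induction l; cases zs; force)+
  from arg_cong[OF eq, of "takeWhile (\<lambda>q. fst q = v)"] have "map (Pair v) ls = map (Pair v) ls'"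
    unfolding take[OF assms(1)] take[OF assms(2)] .
  moreover from arg_cong[OF eq, of "dropWhile (\<lambda>q. fst q = v)"] have "ys = ys'"
    unfolding drop[OF assms(1)] drop[OF assms(2)] .
  ultimately show "ls = ls' \<and> ys = ys'" by (simp add: inj_on_def)
qed simp

definition distinct_lists :: "'a set \<Rightarrow> 'a list set" where
  "distinct_lists A = {xs. set xs \<subseteq> A \<and> distinct xs}"

lemma finite_distinct_lists: "finite A \<Longrightarrow> finite (distinct_lists A)"
  unfolding distinct_lists_def by (rule finite_subset_distinct)

lemma length_le_card_if_distinct_lists: "finite A \<Longrightarrow> xs \<in> distinct_lists A \<Longrightarrow> length xs \<le> card A"
  unfolding distinct_lists_def by (metis (mono_tags) card_mono distinct_card mem_Collect_eq)

lemma rev_distinct_lists: "xs \<in> distinct_lists A \<Longrightarrow> rev xs \<in> distinct_lists A"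
  by (simp add: distinct_lists_def)

lemma power_sum_list: "(c :: 'a::monoid_mult) ^ sum_list ns = prod_list (map (\<lambda>n. c ^ n) ns)"
  by (induction ns) (auto simp: power_add)

lemma mem_set_Cons_iff: "xs \<in> set_Cons A L \<longleftrightarrow> (\<exists>a as. xs = a # as \<and> a \<in> A \<and> as \<in> L)"
  by (auto simp: set_Cons_def)

lemma set_Cons_eq_image: "set_Cons A L = (\<lambda>(a, as). a # as) ` (A \<times> L)"
  by (auto simp: set_Cons_def)

lemma finite_listset: "(\<And>A. A \<in> set As \<Longrightarrow> finite A) \<Longrightarrow> finite (listset As)"
  by (induction As) (auto simp: set_Cons_eq_image)

lemma sum_listset_prod_list:
  fixes h :: "'a \<Rightarrow> 'b::comm_semiring_1"
  assumes "\<And>A. A \<in> set As \<Longrightarrow> finite A"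
  shows "(\<Sum>xs\<in>listset As. prod_list (map h xs)) = prod_list (map (\<lambda>A. \<Sum>a\<in>A. h a) As)"
  using assms
proof (induction As)
  case (Cons A As)
  have "inj_on (\<lambda>(a, as). a # as) (A \<times> listset As)"
    by (auto simp: inj_on_def)
  then have "(\<Sum>xs\<in>listset (A # As). prod_list (map h xs)) =
      (\<Sum>(a, as)\<in>A \<times> listset As. h a * prod_list (map h as))"
    by (simp add: set_Cons_eq_image sum.reindex case_prod_beta')
  also have "\<dots> = (\<Sum>a\<in>A. h a) * (\<Sum>as\<in>listset As. prod_list (map h as))"
    by (simp add: sum.cartesian_product[symmetric] sum_product)
  finally show ?case using Cons by simp
qed simp

section \<open>Sums in $[0, \infty]$\<close>

lemma sum_le_infsum_ennreal: "finite F \<Longrightarrow> F \<subseteq> A \<Longrightarrow> sum f F \<le> infsum (f :: 'a \<Rightarrow> ennreal) A"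
  unfolding nonneg_infsum_complete[of A f, OF zero_le] by (rule SUP_upper) simp

lemma infsum_Sigma_ennreal:
  fixes f :: "'a \<times> 'b \<Rightarrow> ennreal"
  assumes fin: "\<And>a. a \<in> A \<Longrightarrow> finite (B a)"
  shows "infsum f (Sigma A B) = infsum (\<lambda>a. \<Sum>b\<in>B a. f (a, b)) A"
proof (rule antisym)
  show "infsum f (Sigma A B) \<le> infsum (\<lambda>a. \<Sum>b\<in>B a. f (a, b)) A"
  proof (rule infsum_le_finite_sums[OF nonneg_summable_on_complete[OF zero_le]])
    fix F assume F: "finite F" "F \<subseteq> Sigma A B"
    then have "sum f F \<le> sum f (Sigma (fst ` F) B)"
      using fin by (intro sum_mono2 finite_SigmaI) force+
    also have "\<dots> = (\<Sum>a\<in>fst ` F. \<Sum>b\<in>B a. f (a, b))"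
      using F fin by (subst sum.Sigma) auto
    also have "\<dots> \<le> infsum (\<lambda>a. \<Sum>b\<in>B a. f (a, b)) A"
      using F by (intro sum_le_infsum_ennreal) auto
    finally show "sum f F \<le> infsum (\<lambda>a. \<Sum>b\<in>B a. f (a, b)) A" .
  qed
  show "infsum (\<lambda>a. \<Sum>b\<in>B a. f (a, b)) A \<le> infsum f (Sigma A B)"
  proof (rule infsum_le_finite_sums[OF nonneg_summable_on_complete[OF zero_le]])
    fix G assume G: "finite G" "G \<subseteq> A"
    then have "(\<Sum>a\<in>G. \<Sum>b\<in>B a. f (a, b)) = sum f (Sigma G B)"
      using fin by (subst sum.Sigma) auto
    also have "\<dots> \<le> infsum f (Sigma A B)"
      using G fin by (intro sum_le_infsum_ennreal) auto
    finally show "(\<Sum>a\<in>G. \<Sum>b\<in>B a. f (a, b)) \<le> infsum f (Sigma A B)" .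
  qed
qed

lemma infsum_le_fibrewise:
  fixes f :: "'a \<Rightarrow> ennreal" and g :: "'b \<Rightarrow> ennreal"
  assumes "h ` A \<subseteq> B"
    and fibre: "\<And>b. b \<in> B \<Longrightarrow> finite {a\<in>A. h a = b} \<and> card {a\<in>A. h a = b} \<le> N"
    and le: "\<And>a. a \<in> A \<Longrightarrow> f a \<le> C * g (h a)"
  shows "infsum f A \<le> of_nat N * C * infsum g B"
proof (rule infsum_le_finite_sums[OF nonneg_summable_on_complete[OF zero_le]])
  fix F assume F: "finite F" "F \<subseteq> A"
  have "sum f F = (\<Sum>b\<in>h ` F. sum f {a\<in>F. h a = b})"
    using F(1) by (rule sum.image_gen)
  also have "\<dots> \<le> (\<Sum>b\<in>h ` F. of_nat N * C * g b)"
  proof (rule sum_mono)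
    fix b assume "b \<in> h ` F"
    then have b: "b \<in> B" using F assms(1) by blast
    have "card {a\<in>F. h a = b} \<le> card {a\<in>A. h a = b}"
      using F fibre[OF b] by (intro card_mono) auto
    then have "of_nat (card {a\<in>F. h a = b}) \<le> (of_nat N :: ennreal)"
      using fibre[OF b] by simp
    then have "of_nat (card {a\<in>F. h a = b}) * (C * g b) \<le> of_nat N * (C * g b)"
      by (rule mult_right_mono) simp
    moreover have "sum f {a\<in>F. h a = b} \<le> of_nat (card {a\<in>F. h a = b}) * (C * g b)"
      using F le by (intro sum_bounded_above) auto
    ultimately show "sum f {a\<in>F. h a = b} \<le> of_nat N * C * g b"
      by (simp add: mult.assoc)
  qed
  also have "\<dots> = of_nat N * C * sum g (h ` F)"
    by (simp add: sum_distrib_left)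
  also have "\<dots> \<le> of_nat N * C * infsum g B"
    using F assms(1) by (intro mult_left_mono sum_le_infsum_ennreal) auto
  finally show "sum f F \<le> of_nat N * C * infsum g B" .
qed

lemma ennreal_power_add_le:
  assumes "0 \<le> x" "p \<le> k" "s \<le> k"
  shows "ennreal x ^ (p + m + s) \<le> ennreal (max 1 x ^ (2 * k)) * ennreal x ^ m"
proof -
  have "x ^ i \<le> max 1 x ^ k" if "i \<le> k" for i
    using assms(1) that order_trans[OF power_mono power_increasing]
      by (metis max.cobounded1 max.cobounded2)
  then have "x ^ p * x ^ s \<le> max 1 x ^ k * max 1 x ^ k"
    using assms by (intro mult_mono) auto
  then have "x ^ p * x ^ s \<le> max 1 x ^ (2 * k)" by (simp add: mult_2 power_add)
  then have "x ^ p * x ^ s * x ^ m \<le> max 1 x ^ (2 * k) * x ^ m"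
    using assms(1) by (intro mult_right_mono) auto
  then have "x ^ (p + m + s) \<le> max 1 x ^ (2 * k) * x ^ m" by (simp add: power_add ac_simps)
  then have "ennreal (x ^ (p + m + s)) \<le> ennreal (max 1 x ^ (2 * k) * x ^ m)"
    by (rule ennreal_leI)
  then show ?thesis using assms(1) by (simp add: ennreal_mult ennreal_power)
qed

section \<open>Self-avoiding walks\<close>

lemma walk_edges_Nil [simp]: "walk_edges [] = []"
  by (simp add: walk_edges_def)

lemma walk_edges_singleton [simp]: "walk_edges [a] = []"
  by (simp add: walk_edges_def)

lemma walk_edges_Cons_Cons [simp]: "walk_edges (a # b # xs) = {a, b} # walk_edges (b # xs)"
proof -
  have "[0..<length (a # b # xs) - 1] = 0 # map Suc [0..<length (b # xs) - 1]"
    by (simp add: upt_conv_Cons map_Suc_upt del: upt_Suc)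
  then show ?thesis by (simp add: walk_edges_def)
qed

lemma walk_edges_map: "walk_edges (map g xs) = map ((`) g) (walk_edges xs)"
  by (induction xs rule: induct_list012) auto

lemma walk_edges_append:
  "xs \<noteq> [] \<Longrightarrow> ys \<noteq> [] \<Longrightarrow>
    walk_edges (xs @ ys) = walk_edges xs @ {last xs, hd ys} # walk_edges ys"
  by (induction xs rule: induct_list012) (auto simp: neq_Nil_conv)

lemma walk_edges_rev: "walk_edges (rev xs) = rev (walk_edges xs)"
proof (induction xs rule: induct_list012)
  case (3 x y zs)
  have "walk_edges (rev (x # y # zs)) = walk_edges (rev (y # zs)) @ [{y, x}]"
    using walk_edges_append[of "rev (y # zs)" "[x]"] by (simp add: last_rev)
  then show ?case using 3 by (simp add: insert_commute)
qed auto

lemma mem_walk_edgesE: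
  assumes "h \<in> set (walk_edges xs)"
  obtains a b where "h = {a, b}" "a \<in> set xs" "b \<in> set xs"
  using assms by (induction xs rule: induct_list012) auto

lemma set_subset_walk_edges: "xs \<noteq> [] \<Longrightarrow> set xs \<subseteq> insert (hd xs) (\<Union> (set (walk_edges xs)))"
  by (induction xs rule: induct_list012) auto

lemma distinct_walk_edges: "distinct xs \<Longrightarrow> distinct (walk_edges xs)"
proof (induction xs rule: induct_list012)
  case (3 x y zs)
  have "{x, y} \<notin> set (walk_edges (y # zs))"
  proof
    assume "{x, y} \<in> set (walk_edges (y # zs))"
    then obtain a b where "{x, y} = {a, b}" "a \<in> set (y # zs)" "b \<in> set (y # zs)"
      by (rule mem_walk_edgesE)
    then have "x \<in> set (y # zs)" by (metis insertI1 insert_iff singletonD)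
    with 3 show False by simp
  qed
  with 3 show ?case by simp
qed auto

definition walk_midedges :: "'a set \<Rightarrow> 'a list \<Rightarrow> 'a set \<Rightarrow> 'a set list" where
  "walk_midedges e vs f = (if vs = [] then [e] else e # walk_edges vs @ [f])"

definition exit_midedge :: "'a \<Rightarrow> 'a list \<Rightarrow> 'a set \<Rightarrow> 'a set" where
  "exit_midedge v vs f = (case vs of [] \<Rightarrow> f | w # _ \<Rightarrow> {v, w})"

lemma exit_midedge_simps [simp]:
  "exit_midedge v [] f = f" "exit_midedge v (w # ws) f = {v, w}"
  by (auto simp: exit_midedge_def)

lemma walk_midedges_Nil [simp]: "walk_midedges e [] f = [e]"
  by (simp add: walk_midedges_def)

lemma walk_midedges_Cons:
  "walk_midedges e (v # vs) f = e # walk_midedges (exit_midedge v vs f) vs f"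
  by (cases vs) (auto simp: walk_midedges_def)

lemma start_in_walk_midedges: "e \<in> set (walk_midedges e vs f)"
  by (simp add: walk_midedges_def)

lemma set_walk_midedges_append:
  "xs \<noteq> [] \<Longrightarrow> ys \<noteq> [] \<Longrightarrow> set (walk_midedges e (xs @ ys) f) =
    set (walk_midedges e xs {last xs, hd ys}) \<union> set (walk_midedges {last xs, hd ys} ys f)"
  by (auto simp: walk_midedges_def walk_edges_append)

lemma saw_Nil: "saw E e [] f \<longleftrightarrow> e \<in> E \<and> f = e"
  by (auto simp: saw_def)

lemma saw_Cons:
  "saw E e (v # vs) f \<longleftrightarrow> e \<in> E \<and> v \<in> e \<and> v \<notin> set vs \<and> v \<in> exit_midedge v vs f \<and>
    e \<notin> set (walk_midedges (exit_midedge v vs f) vs f) \<and> saw E (exit_midedge v vs f) vs f"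
  by (cases vs) (auto simp: saw_def walk_midedges_def)

lemma saw_startD: "saw E e vs f \<Longrightarrow> e \<in> E"
  and saw_endD: "saw E e vs f \<Longrightarrow> f \<in> E"
  and saw_distinctD: "saw E e vs f \<Longrightarrow> distinct vs"
  by (auto simp: saw_def)

lemma saw_walk_midedges_subset: "saw E e vs f \<Longrightarrow> set (walk_midedges e vs f) \<subseteq> E"
  by (auto simp: saw_def walk_midedges_def)

lemma saw_append:
  assumes "xs \<noteq> []" "ys \<noteq> []"
  defines "m \<equiv> {last xs, hd ys}"
  shows "saw E e (xs @ ys) f \<longleftrightarrow> saw E e xs m \<and> saw E m ys f \<and> set xs \<inter> set ys = {} \<and>
    set (walk_midedges e xs m) \<inter> set (walk_midedges m ys f) = {m}"
proof -
  have edges: "walk_edges (xs @ ys) = walk_edges xs @ m # walk_edges ys"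
    using assms by (simp add: walk_edges_append)
  have "distinct (e # walk_edges (xs @ ys) @ [f]) \<longleftrightarrow>
      distinct (e # walk_edges xs @ [m]) \<and> distinct (m # walk_edges ys @ [f]) \<and>
      set (e # walk_edges xs @ [m]) \<inter> set (m # walk_edges ys @ [f]) = {m}"
    unfolding edges by auto
  moreover have "last xs \<in> m" "hd ys \<in> m" by (simp_all add: m_def)
  ultimately show ?thesis
    unfolding saw_def walk_midedges_def using assms(1,2)
    by (simp only: edges hd_append2 last_append distinct_append set_append if_False) auto
qed

lemma saw_rev: "saw E e vs f \<Longrightarrow> saw E f (rev vs) e"
proof (cases "vs = []")
  case False
  assume "saw E e vs f"
  moreover have "f # walk_edges (rev vs) @ [e] = rev (e # walk_edges vs @ [f])"
    by (simp add: walk_edges_rev)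
  ultimately show ?thesis
    using False by (auto simp: saw_def hd_rev last_rev walk_edges_rev simp del: distinct_rev
        intro: distinct_rev[THEN iffD2])
qed (simp add: saw_Nil)

lemma set_walk_midedges_rev:
  "saw E e vs f \<Longrightarrow> set (walk_midedges f (rev vs) e) = set (walk_midedges e vs f)"
  by (cases "vs = []") (auto simp: walk_midedges_def walk_edges_rev saw_Nil)

lemma saw_later_vertex_midedges:
  assumes "saw E e vs f" "u \<in> set vs" "u \<noteq> hd vs"
  obtains a b where "a \<in> set (walk_midedges e vs f)" "b \<in> set (walk_midedges e vs f)"
    "a \<noteq> b" "a \<noteq> e" "b \<noteq> e" "u \<in> a" "u \<in> b"
  using assms
proof (induction vs arbitrary: e)
  case (Cons x xs)
  define e' where "e' = exit_midedge x xs f"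
  have saw': "e \<notin> set (walk_midedges e' xs f)" "saw E e' xs f"
    using Cons.prems(2) unfolding saw_Cons e'_def by auto
  have u: "u \<noteq> x" "u \<in> set xs" using Cons.prems by auto
  then obtain y ys where xs: "xs = y # ys" by (cases xs) auto
  have midedges: "set (walk_midedges e (x # xs) f) = insert e (set (walk_midedges e' xs f))"
    by (simp add: walk_midedges_Cons e'_def)
  show ?case
  proof (cases "u = y")
    case True
    define b where "b = exit_midedge y ys f"
    have "y \<in> b" "e' \<notin> set (walk_midedges b ys f)"
      using saw'(2) unfolding xs saw_Cons b_def by auto
    moreover have "set (walk_midedges e' xs f) = insert e' (set (walk_midedges b ys f))"
      by (simp add: xs walk_midedges_Cons b_def)
    moreover have "e' = {x, y}" by (simp add: e'_def xs)
    ultimately show ?thesis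
      using Cons.prems(1)[of e' b] saw'(1) midedges True start_in_walk_midedges[of b ys f]
      by auto
  next
    case False
    show ?thesis
    proof (rule Cons.IH[OF _ saw'(2) u(2)])
      show "u \<noteq> hd xs" using False xs by simp
    next
      fix a b assume "a \<in> set (walk_midedges e' xs f)" "b \<in> set (walk_midedges e' xs f)"
        "a \<noteq> b" "a \<noteq> e'" "b \<noteq> e'" "u \<in> a" "u \<in> b"
      then show thesis using Cons.prems(1)[of a b] saw'(1) midedges by auto
    qed
  qed
qed simp

section \<open>Walks inside a gadget\<close>

definition gadget_walks :: "'g set \<Rightarrow> 'g set set \<Rightarrow> 'g \<Rightarrow> 'g \<Rightarrow> 'g list set" where
  "gadget_walks K EH p q = {ls. ls \<noteq> [] \<and> distinct ls \<and> set ls \<subseteq> K \<and>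
     hd ls = p \<and> last ls = q \<and> set (walk_edges ls) \<subseteq> EH}"

definition gadget_weight :: "'g set \<Rightarrow> 'g set set \<Rightarrow> 'g \<Rightarrow> 'g \<Rightarrow> real \<Rightarrow> real" where
  "gadget_weight K EH p q x = (\<Sum>ls\<in>gadget_walks K EH p q. x ^ length ls)"

lemma finite_gadget_walks: "finite K \<Longrightarrow> finite (gadget_walks K EH p q)"
  by (rule finite_subset[OF _ finite_subset_distinct]) (auto simp: gadget_walks_def)

lemma rev_gadget_walks: "rev ` gadget_walks K EH p q = gadget_walks K EH q p"
proof -
  have rev_mem: "rev ls \<in> gadget_walks K EH q p" if "ls \<in> gadget_walks K EH p q" for ls p q
    using that by (simp add: gadget_walks_def walk_edges_rev hd_rev last_rev)
  show ?thesis
  proof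
    show "rev ` gadget_walks K EH p q \<subseteq> gadget_walks K EH q p" using rev_mem by blast
    show "gadget_walks K EH q p \<subseteq> rev ` gadget_walks K EH p q"
    proof
      fix ls assume "ls \<in> gadget_walks K EH q p"
      then show "ls \<in> rev ` gadget_walks K EH p q"
        using rev_mem by (intro image_eqI[of ls rev "rev ls"]) auto
    qed
  qed
qed

lemma gadget_weight_commute: "gadget_weight K EH p q x = gadget_weight K EH q p x"
  unfolding gadget_weight_def rev_gadget_walks[of K EH p q, symmetric]
  by (subst sum.reindex) (auto simp: inj_on_def)

lemma map_automorphism_gadget_walks:
  assumes aut: "graph_automorphism K EH \<gamma>" and ls: "ls \<in> gadget_walks K EH p q"
  shows "map \<gamma> ls \<in> gadget_walks K EH (\<gamma> p) (\<gamma> q)"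
proof -
  have bij: "bij_betw \<gamma> K K" and adj: "\<And>u w. u \<in> K \<Longrightarrow> w \<in> K \<Longrightarrow> {u, w} \<in> EH \<longleftrightarrow> {\<gamma> u, \<gamma> w} \<in> EH"
    using aut by (auto simp: graph_automorphism_def)
  have ls': "ls \<noteq> []" "distinct ls" "set ls \<subseteq> K" "hd ls = p" "last ls = q"
      "set (walk_edges ls) \<subseteq> EH"
    using ls by (auto simp: gadget_walks_def)
  have "set (walk_edges (map \<gamma> ls)) \<subseteq> EH"
  proof
    fix h' assume "h' \<in> set (walk_edges (map \<gamma> ls))"
    then obtain h where h: "h \<in> set (walk_edges ls)" "h' = \<gamma> ` h" by (auto simp: walk_edges_map)
    obtain a b where "h = {a, b}" "a \<in> set ls" "b \<in> set ls"
      using h(1) by (rule mem_walk_edgesE)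
    with h ls' adj[of a b] show "h' \<in> EH" by auto
  qed
  moreover have "distinct (map \<gamma> ls)"
    using ls' bij by (auto simp: distinct_map bij_betw_def intro: inj_on_subset)
  ultimately show ?thesis
    using ls' bij_betwE[OF bij] by (auto simp: gadget_walks_def hd_map last_map)
qed

lemma gadget_weight_le_automorphism:
  assumes "finite K" "0 \<le> x" and aut: "graph_automorphism K EH \<gamma>"
  shows "gadget_weight K EH p q x \<le> gadget_weight K EH (\<gamma> p) (\<gamma> q) x"
proof -
  have inj: "inj_on \<gamma> K" using aut by (simp add: graph_automorphism_def bij_betw_def)
  have "inj_on (map \<gamma>) (gadget_walks K EH p q)"
  proof (rule inj_onI)
    fix xs ys assume "xs \<in> gadget_walks K EH p q" "ys \<in> gadget_walks K EH p q" "map \<gamma> xs = map \<gamma> ys"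
    moreover from this(1,2) have "set xs \<union> set ys \<subseteq> K" by (auto simp: gadget_walks_def)
    ultimately show "xs = ys" using inj by (metis map_inj_on inj_on_subset)
  qed
  then have "gadget_weight K EH p q x = (\<Sum>ls\<in>map \<gamma> ` gadget_walks K EH p q. x ^ length ls)"
    by (simp add: gadget_weight_def sum.reindex)
  also have "\<dots> \<le> gadget_weight K EH (\<gamma> p) (\<gamma> q) x"
    unfolding gadget_weight_def using assms map_automorphism_gadget_walks[OF aut]
    by (intro sum_mono2 finite_gadget_walks) auto
  finally show ?thesis .
qed

text \<open>The two-element subsets of a three-element set are the complements of its points,
  so a group acting transitively on the points acts transitively on these pairs.\<close>
lemma pair_function_le_if_transitive:
  fixes N :: "'a \<Rightarrow> 'a \<Rightarrow> 'b::order"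
  assumes card: "card P = 3" and sym: "\<And>p q. N p q = N q p"
    and trans: "\<And>r r'. r \<in> P \<Longrightarrow> r' \<in> P \<Longrightarrow>
      \<exists>\<gamma>. inj_on \<gamma> P \<and> \<gamma> ` P \<subseteq> P \<and> \<gamma> r = r' \<and> (\<forall>p q. N p q \<le> N (\<gamma> p) (\<gamma> q))"
    and pq: "p \<in> P" "q \<in> P" "p \<noteq> q" and pq': "p' \<in> P" "q' \<in> P" "p' \<noteq> q'"
  shows "N p q \<le> N p' q'"
proof -
  have third: "\<exists>r. P = {p, q, r} \<and> r \<noteq> p \<and> r \<noteq> q" if "p \<in> P" "q \<in> P" "p \<noteq> q" for p q
  proof -
    have "card (P - {p, q}) = 1"
      using that card by (subst card_Diff_subset) auto
    then obtain r where "P - {p, q} = {r}" by (rule card_1_singletonE)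
    then show ?thesis using that by auto
  qed
  obtain r where r: "P = {p, q, r}" "r \<noteq> p" "r \<noteq> q" using third[OF pq] by blast
  obtain r' where r': "P = {p', q', r'}" "r' \<noteq> p'" "r' \<noteq> q'" using third[OF pq'] by blast
  have "r \<in> P" "r' \<in> P" using r r' by auto
  then obtain \<gamma> where \<gamma>: "inj_on \<gamma> P" "\<gamma> ` P \<subseteq> P" "\<gamma> r = r'" "\<And>p q. N p q \<le> N (\<gamma> p) (\<gamma> q)"
    using trans by blast
  have "\<gamma> p \<noteq> \<gamma> q" "\<gamma> p \<noteq> r'" "\<gamma> q \<noteq> r'"
    using \<gamma>(1,3) r pq by (auto dest: inj_onD)
  moreover have "\<gamma> p \<in> P" "\<gamma> q \<in> P" using \<gamma>(2) pq by auto
  ultimately have "\<gamma> p = p' \<and> \<gamma> q = q' \<or> \<gamma> p = q' \<and> \<gamma> q = p'"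
    using r'(1) by auto
  then show ?thesis using \<gamma>(4)[of p q] sym by auto
qed

lemma gadget_weight_ports_eq:
  assumes gad: "gadget K EH w1 w2 w3" and x: "0 \<le> x"
    and pq: "p \<in> {w1, w2, w3}" "q \<in> {w1, w2, w3}" "p \<noteq> q"
  shows "gadget_weight K EH p q x = gadget_weight K EH w1 w2 x"
proof -
  let ?P = "{w1, w2, w3}" and ?N = "\<lambda>p q. gadget_weight K EH p q x"
  from gad obtain \<Gamma> where
    \<Gamma>: "\<forall>\<gamma>\<in>\<Gamma>. graph_automorphism K EH \<gamma> \<and> \<gamma> ` ?P = ?P" "\<forall>r\<in>?P. \<forall>r'\<in>?P. \<exists>\<gamma>\<in>\<Gamma>. \<gamma> r = r'"
    unfolding gadget_def by blast
  have K: "finite K" "?P \<subseteq> K" and distinct: "w1 \<noteq> w2" "w1 \<noteq> w3" "w2 \<noteq> w3"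
    using gad by (auto simp: gadget_def)
  then have card: "card ?P = 3" by simp
  have "\<exists>\<gamma>. inj_on \<gamma> ?P \<and> \<gamma> ` ?P \<subseteq> ?P \<and> \<gamma> r = r' \<and> (\<forall>p q. ?N p q \<le> ?N (\<gamma> p) (\<gamma> q))"
    if r: "r \<in> ?P" "r' \<in> ?P" for r r'
  proof -
    obtain \<gamma> where \<gamma>: "\<gamma> \<in> \<Gamma>" "\<gamma> r = r'" using \<Gamma>(2)[rule_format, OF r] ..
    have aut: "graph_automorphism K EH \<gamma>" and "\<gamma> ` ?P = ?P"
      using \<Gamma>(1) \<gamma>(1) by simp_all
    have "inj_on \<gamma> K" using aut by (simp add: graph_automorphism_def bij_betw_def)
    then have "inj_on \<gamma> ?P" using K(2) by (rule inj_on_subset)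
    with \<open>\<gamma> ` ?P = ?P\<close> \<gamma>(2) show ?thesis
      using gadget_weight_le_automorphism[OF K(1) x aut] by blast
  qed
  note le = pair_function_le_if_transitive[where N = "\<lambda>p q. gadget_weight K EH p q x",
      OF card gadget_weight_commute this]
  show ?thesis
  proof (rule antisym)
    show "?N p q \<le> ?N w1 w2" using pq distinct(1) by (intro le) simp_all
    show "?N w1 w2 \<le> ?N p q" using pq distinct(1) by (intro le) simp_all
  qed
qed

section \<open>The transformed graph\<close>

locale local_transformation =
  fixes V :: "'v set" and E :: "'v set set" and K :: "'g set" and EH :: "'g set set"
    and w1 w2 w3 :: 'g and port :: "'v \<Rightarrow> 'v set \<Rightarrow> 'g"
  assumes simple: "simple_graph V E"
    and gadget: "gadget K EH w1 w2 w3"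
    and ports: "port_assignment V E {w1, w2, w3} port"
begin

abbreviation "E1 \<equiv> lt_edges V E EH port"
abbreviation "lift \<equiv> lt_edge port"
abbreviation "Ports \<equiv> {w1, w2, w3}"

lemma edgeE:
  assumes "e \<in> E" obtains u v where "u \<in> V" "v \<in> V" "u \<noteq> v" "e = {u, v}"
  using assms simple by (auto simp: simple_graph_def)

lemma gadget_edgeE:
  assumes "h \<in> EH" obtains a b where "a \<in> K" "b \<in> K" "a \<noteq> b" "h = {a, b}"
  using assms gadget by (auto simp: gadget_def simple_graph_def)

lemma finite_K: "finite K"
  using gadget by (simp add: gadget_def)

lemma finite_EH: "finite EH"
proof (rule finite_subset[OF _ finite_Pow_iff[THEN iffD2, OF finite_K]])
  show "EH \<subseteq> Pow K" by (auto elim: gadget_edgeE)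
qed

lemma Ports_subset_K: "Ports \<subseteq> K"
  using gadget by (simp add: gadget_def)

lemma edge_vertex_in_V: "e \<in> E \<Longrightarrow> v \<in> e \<Longrightarrow> v \<in> V"
  by (auto elim: edgeE)

lemma bij_betw_port: "v \<in> V \<Longrightarrow> bij_betw (port v) (incident_edges E v) Ports"
  using ports by (simp add: port_assignment_def)

lemma port_in_Ports: "e \<in> E \<Longrightarrow> v \<in> e \<Longrightarrow> port v e \<in> Ports"
  using bij_betw_port[OF edge_vertex_in_V] by (auto simp: incident_edges_def dest: bij_betwE)

lemma port_eq_iff:
  "e \<in> E \<Longrightarrow> e' \<in> E \<Longrightarrow> v \<in> e \<Longrightarrow> v \<in> e' \<Longrightarrow> port v e = port v e' \<longleftrightarrow> e = e'"
  using bij_betw_port[OF edge_vertex_in_V]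
  by (auto simp: incident_edges_def bij_betw_def dest: inj_onD)

lemma card_incident_edges: "v \<in> V \<Longrightarrow> card (incident_edges E v) = 3"
  using bij_betw_same_card[OF bij_betw_port] gadget by (simp add: gadget_def)

lemma at_most_three_incident_edges:
  assumes "v \<in> V" "A \<subseteq> incident_edges E v" shows "card A \<le> 3"
proof -
  have "finite (incident_edges E v)"
    using card_incident_edges[OF assms(1)] by (metis card.infinite zero_neq_numeral)
  then show ?thesis
    using card_mono[OF _ assms(2)] card_incident_edges[OF assms(1)] by simp
qed

lemma mem_lift: "p \<in> lift e \<longleftrightarrow> fst p \<in> e \<and> snd p = port (fst p) e"
  by (cases p) (auto simp: lt_edge_def)

lemma fst_lift [simp]: "fst ` lift e = e"
  by (simp add: lt_edge_def image_image)

lemma lift_eq_iff [simp]: "lift e = lift e' \<longleftrightarrow> e = e'"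
  by (metis fst_lift)

lemma lift_in_E1: "e \<in> E \<Longrightarrow> lift e \<in> E1"
  by (auto simp: lt_edges_def)

lemma lift_doubleton: "lift {u, v} = {(u, port u {u, v}), (v, port v {u, v})}"
  by (simp add: lt_edge_def)

definition inner_edges :: "'v \<Rightarrow> ('v \<times> 'g) set set" where
  "inner_edges v = {{(v, a), (v, b)} | a b. True}"

lemma inner_edgesI [simp]: "{(v, a), (v, b)} \<in> inner_edges v"
  by (auto simp: inner_edges_def)

lemma fst_inner_edge: "F \<in> inner_edges v \<Longrightarrow> fst ` F = {v}"
  by (auto simp: inner_edges_def)

lemma lift_notin_inner_edges: "e \<in> E \<Longrightarrow> lift e \<notin> inner_edges v"
  by (metis edgeE fst_inner_edge fst_lift insert_absorb2 doubleton_eq_iff singleton_insert_inj_eq)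

lemma inner_edges_disjoint: "u \<noteq> v \<Longrightarrow> inner_edges u \<inter> inner_edges v = {}"
  using fst_inner_edge by blast

lemma lift_image_inner_edges_disjoint: "A \<subseteq> E \<Longrightarrow> lift ` A \<inter> inner_edges v = {}"
  using lift_notin_inner_edges by blast

lemma E1E:
  assumes "F \<in> E1"
  obtains (inner) v a b where "v \<in> V" "{a, b} \<in> EH" "F = {(v, a), (v, b)}"
    | (lifted) e where "e \<in> E" "F = lift e"
  using assms unfolding lt_edges_def by blast

lemma inner_E1E:
  assumes "F \<in> E1" "F \<notin> lift ` E"
  obtains w a b where "w \<in> V" "{a, b} \<in> EH" "F = {(w, a), (w, b)}"
  using assms by (cases rule: E1E) auto

lemma inner_in_E1_iff: "{(v, a), (v, b)} \<in> E1 \<longleftrightarrow> v \<in> V \<and> {a, b} \<in> EH"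
proof
  assume F: "{(v, a), (v, b)} \<in> E1"
  then show "v \<in> V \<and> {a, b} \<in> EH"
  proof (cases rule: E1E)
    case (inner v' a' b')
    have "{v} = {v'}" "{a, b} = {a', b'}"
      using arg_cong[OF inner(3), of "image fst"] arg_cong[OF inner(3), of "image snd"] by simp_all
    with inner show ?thesis by simp
  next
    case (lifted e)
    then show ?thesis using lift_notin_inner_edges[of e v] inner_edgesI[of v a b] by metis
  qed
qed (auto simp: lt_edges_def)

lemma cross_in_E1_iff:
  assumes "v \<noteq> w"
  shows "{(v, a), (w, b)} \<in> E1 \<longleftrightarrow> {v, w} \<in> E \<and> a = port v {v, w} \<and> b = port w {v, w}"
proof
  assume "{(v, a), (w, b)} \<in> E1"
  then show "{v, w} \<in> E \<and> a = port v {v, w} \<and> b = port w {v, w}"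
  proof (cases rule: E1E)
    case (inner u a' b')
    then have "fst ` {(v, a), (w, b)} = fst ` {(u, a'), (u, b')}" by simp
    with assms show ?thesis by (simp add: doubleton_eq_iff)
  next
    case (lifted e)
    have "fst ` {(v, a), (w, b)} = fst ` lift e" using lifted(2) by (rule arg_cong)
    then have "e = {v, w}" by simp
    moreover have "(v, a) \<in> lift e" "(w, b) \<in> lift e" using lifted(2) by auto
    ultimately show ?thesis using lifted(1) by (simp add: mem_lift)
  qed
qed (use lift_in_E1 lift_doubleton in force)

lemma E1_subset:
  assumes "F \<in> E1" shows "F \<subseteq> V \<times> K"
  using assms
proof (cases rule: E1E)
  case (inner v a b)
  then show ?thesis by (auto elim!: gadget_edgeE simp: doubleton_eq_iff)
next
  case (lifted e)
  have "port v e \<in> K" if "v \<in> e" for v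
    using port_in_Ports[OF lifted(1) that] Ports_subset_K by blast
  with lifted show ?thesis using edge_vertex_in_V by (auto simp: mem_lift)
qed

lemma saw_E1_vertices:
  assumes "saw E1 F ws F'" shows "set ws \<subseteq> V \<times> K"
proof (cases "ws = []")
  case False
  with assms have "insert (hd ws) (\<Union> (set (walk_edges ws))) \<subseteq> V \<times> K"
    using E1_subset by (fastforce simp: saw_def)
  with False show ?thesis using set_subset_walk_edges by blast
qed simp

lemma walk_edges_map_Pair_inner: "set (walk_edges (map (Pair v) ls)) \<subseteq> inner_edges v"
  by (auto simp: walk_edges_map elim!: mem_walk_edgesE)

lemma walk_edges_map_Pair_subset_E1_iff:
  assumes "v \<in> V"
  shows "set (walk_edges (map (Pair v) ls)) \<subseteq> E1 \<longleftrightarrow> set (walk_edges ls) \<subseteq> EH"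
proof -
  have "Pair v ` h \<in> E1 \<longleftrightarrow> h \<in> EH" if "h \<in> set (walk_edges ls)" for h
    using that by (auto simp: inner_in_E1_iff assms elim!: mem_walk_edgesE)
  then show ?thesis by (auto simp: walk_edges_map)
qed

lemma saw_map_Pair_iff:
  assumes "e \<in> E" "f \<in> E" "ls \<noteq> []"
  shows "saw E1 (lift e) (map (Pair v) ls) (lift f) \<longleftrightarrow>
    ls \<in> gadget_walks K EH (port v e) (port v f) \<and> v \<in> e \<and> v \<in> f \<and> e \<noteq> f"
proof
  assume saw: "saw E1 (lift e) (map (Pair v) ls) (lift f)"
  then have "hd (map (Pair v) ls) \<in> lift e" "last (map (Pair v) ls) \<in> lift f"
    "distinct (lift e # walk_edges (map (Pair v) ls) @ [lift f])"
    using assms(3) by (auto simp: saw_def)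
  then have v: "v \<in> e" "hd ls = port v e" "v \<in> f" "last ls = port v f" "e \<noteq> f"
    using assms(3) by (auto simp: mem_lift hd_map last_map)
  have "set (walk_edges ls) \<subseteq> EH"
    using saw assms walk_edges_map_Pair_subset_E1_iff[OF edge_vertex_in_V[OF assms(1) v(1)]]
    by (auto simp: saw_def)
  moreover have "set ls \<subseteq> K" using saw_E1_vertices[OF saw] by auto
  moreover have "distinct ls" using saw_distinctD[OF saw] by (simp add: distinct_map)
  ultimately show "ls \<in> gadget_walks K EH (port v e) (port v f) \<and> v \<in> e \<and> v \<in> f \<and> e \<noteq> f"
    using v assms(3) by (simp add: gadget_walks_def)
next
  assume "ls \<in> gadget_walks K EH (port v e) (port v f) \<and> v \<in> e \<and> v \<in> f \<and> e \<noteq> f"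
  then have ls: "distinct ls" "hd ls = port v e" "last ls = port v f" "set (walk_edges ls) \<subseteq> EH"
    and v: "v \<in> e" "v \<in> f" "e \<noteq> f"
    by (auto simp: gadget_walks_def)
  have "lift e \<notin> set (walk_edges (map (Pair v) ls))" "lift f \<notin> set (walk_edges (map (Pair v) ls))"
    using walk_edges_map_Pair_inner lift_notin_inner_edges assms(1,2) by blast+
  moreover have "set (walk_edges (map (Pair v) ls)) \<subseteq> E1"
    using ls(4) walk_edges_map_Pair_subset_E1_iff[OF edge_vertex_in_V[OF assms(1) v(1)]] by simp
  moreover have "distinct (walk_edges (map (Pair v) ls))"
    using ls(1) by (intro distinct_walk_edges) (simp add: distinct_map inj_on_def)
  ultimately show "saw E1 (lift e) (map (Pair v) ls) (lift f)"
    using assms ls v lift_in_E1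
      by (auto simp: saw_def distinct_map inj_on_def hd_map last_map mem_lift)
qed

lemma saw_E1_leave_gadgetE:
  assumes saw: "saw E1 E' (map (Pair w) ls @ ys) F'" and "ls \<noteq> []" "ys \<noteq> []"
    and leave: "fst (hd ys) \<noteq> w"
  obtains u where "{w, u} \<in> E" "fst (hd ys) = u"
    "saw E1 E' (map (Pair w) ls) (lift {w, u})" "saw E1 (lift {w, u}) ys F'"
    "set (walk_midedges E' (map (Pair w) ls) (lift {w, u})) \<inter>
       set (walk_midedges (lift {w, u}) ys F') = {lift {w, u}}"
    "set (walk_midedges E' (map (Pair w) ls @ ys) F') =
       set (walk_midedges E' (map (Pair w) ls) (lift {w, u})) \<union>
       set (walk_midedges (lift {w, u}) ys F')"
proof -
  obtain u b where hd: "hd ys = (u, b)" by (cases "hd ys")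
  have last: "last (map (Pair w) ls) = (w, last ls)" using \<open>ls \<noteq> []\<close> by (simp add: last_map)
  note split = saw_append[THEN iffD1, OF _ _ saw] \<open>ls \<noteq> []\<close> \<open>ys \<noteq> []\<close>
  have "{(w, last ls), (u, b)} \<in> E1"
    using saw_startD[of E1 _ ys F'] split unfolding last hd by auto
  then have "{w, u} \<in> E" "last ls = port w {w, u}" "b = port u {w, u}"
    using cross_in_E1_iff leave hd by auto
  moreover from this have "{last (map (Pair w) ls), hd ys} = lift {w, u}"
    unfolding last hd lift_doubleton by simp
  ultimately show thesis
    using that[of u] split hd set_walk_midedges_append[of "map (Pair w) ls" ys E' F'] by simp
qed

section \<open>Lifting walks of $G$\<close>

text \<open>Otherwise \<open>v\<close> would lie on \<open>e\<close>, \<open>e'\<close> and the two further mid-edges through which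
  the walk enters and leaves it again: four edges at a vertex of degree three.\<close>
lemma saw_not_revisiting:
  assumes saw: "saw E e' vs f" and e: "e \<in> E" "v \<in> e" "v \<in> e'" "e \<noteq> e'"
    and e_notin: "e \<notin> set (walk_midedges e' vs f)" and hd: "vs \<noteq> [] \<Longrightarrow> hd vs \<noteq> v"
  shows "v \<notin> set vs"
proof
  assume v: "v \<in> set vs"
  then have "vs \<noteq> []" by auto
  with hd have "v \<noteq> hd vs" by simp
  then obtain a b where ab: "a \<in> set (walk_midedges e' vs f)" "b \<in> set (walk_midedges e' vs f)"
    "a \<noteq> b" "a \<noteq> e'" "b \<noteq> e'" "v \<in> a" "v \<in> b"
    using saw_later_vertex_midedges[OF saw v] by blast
  have "distinct [e, e', a, b]" using ab e e_notin by auto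
  then have "card {e, e', a, b} = 4" using distinct_card by fastforce
  moreover have "{e, e', a, b} \<subseteq> incident_edges E v"
    using ab e saw_walk_midedges_subset[OF saw] saw_startD[OF saw]
      by (auto simp: incident_edges_def)
  ultimately show False
    using at_most_three_incident_edges[OF edge_vertex_in_V[OF e(1,2)], of "{e, e', a, b}"] by simp
qed
fun lifted_walk :: "'v list \<Rightarrow> 'g list list \<Rightarrow> ('v \<times> 'g) list" where
  "lifted_walk (v # vs) (ls # lss) = map (Pair v) ls @ lifted_walk vs lss"
| "lifted_walk _ _ = []"

fun crossing_walks :: "'v set \<Rightarrow> 'v list \<Rightarrow> 'v set \<Rightarrow> 'g list set list" where
  "crossing_walks e [] f = []"
| "crossing_walks e (v # vs) f =
     gadget_walks K EH (port v e) (port v (exit_midedge v vs f)) #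
     crossing_walks (exit_midedge v vs f) vs f"

lemma listset_crossing_walksD:
  "lss \<in> listset (crossing_walks e vs f) \<Longrightarrow> length lss = length vs \<and> (\<forall>ls\<in>set lss. ls \<noteq> [])"
proof (induction vs arbitrary: e lss)
  case (Cons v vs)
  then obtain ls lss' where "lss = ls # lss'"
      "ls \<in> gadget_walks K EH (port v e) (port v (exit_midedge v vs f))"
    "lss' \<in> listset (crossing_walks (exit_midedge v vs f) vs f)"
    by (auto simp: mem_set_Cons_iff)
  with Cons.IH[OF this(3)] show ?case by (auto simp: gadget_walks_def)
qed simp

lemma finite_crossing_walks: "A \<in> set (crossing_walks e vs f) \<Longrightarrow> finite A"
  by (induction vs arbitrary: e) (auto simp: finite_gadget_walks[OF finite_K])

lemma crossing_walks_between_ports: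
  "saw E e vs f \<Longrightarrow> length (crossing_walks e vs f) = length vs \<and>
    (\<forall>A\<in>set (crossing_walks e vs f).
      \<exists>p q. A = gadget_walks K EH p q \<and> p \<in> Ports \<and> q \<in> Ports \<and> p \<noteq> q)"
proof (induction vs arbitrary: e)
  case (Cons v vs)
  define e' where "e' = exit_midedge v vs f"
  have saw: "e \<in> E" "v \<in> e" "v \<in> e'" "e \<notin> set (walk_midedges e' vs f)" "saw E e' vs f"
    using Cons.prems unfolding saw_Cons e'_def by auto
  have "e \<noteq> e'" using saw(4) start_in_walk_midedges by metis
  then have "port v e \<noteq> port v e'"
    using port_eq_iff[OF saw(1) saw_startD[OF saw(5)] saw(2,3)] by simp
  moreover have "port v e \<in> Ports" "port v e' \<in> Ports"
    using port_in_Ports saw(1-3) saw_startD[OF saw(5)] by auto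
  ultimately show ?case using Cons.IH[OF saw(5)] by (auto simp: e'_def)
qed simp

lemma lifted_walk_Nil [simp]: "lifted_walk [] lss = []"
  by (cases lss) auto

lemma fst_set_lifted_walk: "fst ` set (lifted_walk vs lss) \<subseteq> set vs"
  by (induction vs lss rule: lifted_walk.induct) auto

lemma hd_lifted_walk: "ls \<noteq> [] \<Longrightarrow> hd (lifted_walk (v # vs) (ls # lss)) = (v, hd ls)"
  by (cases ls) auto

lemma length_lifted_walk:
  "length lss = length vs \<Longrightarrow> length (lifted_walk vs lss) = sum_list (map length lss)"
  by (induction vs lss rule: lifted_walk.induct) auto

lemma fst_hd_lifted_walk:
  assumes "lss \<in> listset (crossing_walks e vs f)" "lifted_walk vs lss \<noteq> []"
  shows "vs \<noteq> [] \<and> fst (hd (lifted_walk vs lss)) = hd vs"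
  using listset_crossing_walksD[OF assms(1)] assms(2) by (cases vs; cases lss) (auto simp: hd_map)

lemma lifted_walk_eq_Nil_iff:
  "length lss = length vs \<Longrightarrow> \<forall>ls\<in>set lss. ls \<noteq> [] \<Longrightarrow> lifted_walk vs lss = [] \<longleftrightarrow> vs = []"
  by (cases vs; cases lss) auto

lemma lifted_walk_inj:
  assumes "distinct vs" "distinct vs'" "length lss = length vs" "length lss' = length vs'"
    "\<forall>ls\<in>set lss. ls \<noteq> []" "\<forall>ls\<in>set lss'. ls \<noteq> []"
    "lifted_walk vs lss = lifted_walk vs' lss'"
  shows "vs = vs' \<and> lss = lss'"
  using assms
proof (induction vs lss arbitrary: vs' lss' rule: lifted_walk.induct)
  case (1 v vs ls lss)
  from "1.prems" obtain v' vs'' ls' lss'' where vs': "vs' = v' # vs''" "lss' = ls' # lss''"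
    by (cases vs'; cases lss') (auto simp: lifted_walk_eq_Nil_iff[symmetric])
  have "v = v'"
    using "1.prems"(5-7) hd_lifted_walk[of ls v vs lss] hd_lifted_walk[of ls' v' vs'' lss''] vs'
      by simp
  moreover have "v \<notin> fst ` set (lifted_walk vs lss)" "v \<notin> fst ` set (lifted_walk vs'' lss'')"
    using "1.prems"(1,2) fst_set_lifted_walk vs' \<open>v = v'\<close> by fastforce+
  ultimately have "ls = ls' \<and> lifted_walk vs lss = lifted_walk vs'' lss''"
    using "1.prems"(7) vs' map_Pair_append_eq_iff[of v "lifted_walk vs lss"
      "lifted_walk vs'' lss''" ls ls']
    by simp
  with "1.IH"[of vs'' lss''] "1.prems" vs' \<open>v = v'\<close> show ?case by auto
next
qed (auto dest: sym simp: lifted_walk_eq_Nil_iff)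

lemma lifted_midedges_disjoint:
  assumes "saw E e (v # vs) f"
  shows "({lift e} \<union> inner_edges v) \<inter>
    (lift ` set (walk_midedges (exit_midedge v vs f) vs f) \<union> (\<Union>u\<in>set vs. inner_edges u)) = {}"
proof (intro equals0I)
  define e' where "e' = exit_midedge v vs f"
  have saw: "e \<in> E" "v \<notin> set vs" "e \<notin> set (walk_midedges e' vs f)" "saw E e' vs f"
    using assms unfolding saw_Cons e'_def by auto
  have "lift e \<notin> lift ` set (walk_midedges e' vs f)" using saw(3) by auto
  moreover have "lift e \<notin> inner_edges u" for u using lift_notin_inner_edges saw(1) by blast
  moreover have "inner_edges v \<inter> lift ` set (walk_midedges e' vs f) = {}"
    using lift_image_inner_edges_disjoint[OF saw_walk_midedges_subset[OF saw(4)]] by blast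
  moreover have "inner_edges v \<inter> inner_edges u = {}" if "u \<in> set vs" for u
    using saw(2) that inner_edges_disjoint[of v u] by auto
  moreover fix F
  assume "F \<in> ({lift e} \<union> inner_edges v) \<inter>
    (lift ` set (walk_midedges (exit_midedge v vs f) vs f) \<union> (\<Union>u\<in>set vs. inner_edges u))"
  ultimately show False unfolding e'_def by blast
qed

lemma lifted_walk_junction:
  assumes "ls \<in> gadget_walks K EH p (port v {v, w})"
      "lss \<in> listset (crossing_walks {v, w} (w # ws) f)"
  shows "lifted_walk (w # ws) lss \<noteq> []"
    and "{last (map (Pair v) ls), hd (lifted_walk (w # ws) lss)} = lift {v, w}"
proof -
  from assms(2) obtain l lss' where "lss = l # lss'"
      "l \<in> gadget_walks K EH (port w {v, w}) (port w (exit_midedge w ws f))"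
    by (auto simp: mem_set_Cons_iff)
  then show "lifted_walk (w # ws) lss \<noteq> []"
      "{last (map (Pair v) ls), hd (lifted_walk (w # ws) lss)} = lift {v, w}"
    using assms(1) hd_lifted_walk[of l w ws lss'] lift_doubleton[of v w]
    by (auto simp: gadget_walks_def last_map insert_commute)
qed

lemma set_walk_midedges_lifted_walk:
  assumes "lss \<in> listset (crossing_walks e vs f)"
  shows "set (walk_midedges (lift e) (lifted_walk vs lss) (lift f)) \<subseteq>
      lift ` set (walk_midedges e vs f) \<union> (\<Union>v\<in>set vs. inner_edges v) \<and>
    lift ` set (walk_midedges e vs f) \<subseteq> set (walk_midedges (lift e) (lifted_walk vs lss) (lift f))"
  using assms
proof (induction vs arbitrary: e lss)
  case (Cons v vs)
  define e' where "e' = exit_midedge v vs f"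
  from Cons.prems obtain ls lss' where lss: "lss = ls # lss'"
    "ls \<in> gadget_walks K EH (port v e) (port v e')" "lss' \<in> listset (crossing_walks e' vs f)"
    by (auto simp: mem_set_Cons_iff e'_def)
  define A where "A = map (Pair v) ls"
  define B where "B = lifted_walk vs lss'"
  have A: "A \<noteq> []" using lss(2) by (simp add: A_def gadget_walks_def)
  have walk: "lifted_walk (v # vs) lss = A @ B" by (simp add: lss(1) A_def B_def)
  have midA: "set (walk_midedges (lift e) A (lift e')) \<subseteq> {lift e, lift e'} \<union> inner_edges v"
    using walk_edges_map_Pair_inner[of v ls] by (auto simp: walk_midedges_def A_def)
  have midedges: "set (walk_midedges e (v # vs) f) = insert e (set (walk_midedges e' vs f))"
    by (simp add: walk_midedges_Cons e'_def)
  have "set (walk_midedges (lift e) (lifted_walk (v # vs) lss) (lift f)) =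
      set (walk_midedges (lift e) A (lift e')) \<union> set (walk_midedges (lift e') B (lift f))"
  proof (cases vs)
    case Nil
    with A walk show ?thesis by (auto simp: B_def e'_def walk_midedges_def)
  next
    case (Cons w ws)
    then have "B \<noteq> []" "{last A, hd B} = lift e'"
      using lifted_walk_junction[of ls "port v e" v w lss' ws f] lss(2,3)
        by (simp_all add: A_def B_def e'_def)
    then show ?thesis using set_walk_midedges_append[OF A] walk by simp
  qed
  moreover note IH = Cons.IH[OF lss(3), folded B_def]
  moreover have "lift e' \<in> set (walk_midedges (lift e) A (lift e'))" using A
      by (simp add: walk_midedges_def)
  moreover have "lift e \<in> set (walk_midedges (lift e) A (lift e'))" by (rule start_in_walk_midedges)
  moreover have "lift e' \<in> lift ` set (walk_midedges e' vs f)" using start_in_walk_midedges by blast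
  ultimately show ?case using midA midedges by auto
qed auto

lemma saw_lifted_walk:
  assumes "saw E e vs f" "lss \<in> listset (crossing_walks e vs f)"
  shows "saw E1 (lift e) (lifted_walk vs lss) (lift f)"
  using assms
proof (induction vs arbitrary: e lss)
  case Nil
  then show ?case using lift_in_E1 by (auto simp: saw_Nil)
next
  case (Cons v vs)
  define e' where "e' = exit_midedge v vs f"
  from Cons.prems(2) obtain ls lss' where lss: "lss = ls # lss'"
    "ls \<in> gadget_walks K EH (port v e) (port v e')" "lss' \<in> listset (crossing_walks e' vs f)"
    by (auto simp: mem_set_Cons_iff e'_def)
  have saw: "e \<in> E" "v \<in> e" "v \<notin> set vs" "v \<in> e'" "e \<notin> set (walk_midedges e' vs f)"
    "saw E e' vs f"
    using Cons.prems(1) unfolding saw_Cons e'_def by auto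
  have e': "e' \<in> E" "e \<noteq> e'" using saw_startD[OF saw(6)] saw(5) start_in_walk_midedges by metis+
  define A where "A = map (Pair v) ls"
  define B where "B = lifted_walk vs lss'"
  have A: "A \<noteq> []" using lss(2) by (simp add: A_def gadget_walks_def)
  have sawA: "saw E1 (lift e) A (lift e')"
    using saw_map_Pair_iff[OF saw(1) e'(1)] A lss(2) saw e' by (simp add: A_def)
  have walk: "lifted_walk (v # vs) lss = A @ B" by (simp add: lss(1) A_def B_def)
  show ?case
  proof (cases vs)
    case Nil
    with sawA walk show ?thesis by (simp add: B_def e'_def)
  next
    case (Cons w ws)
    then have B: "B \<noteq> []" "{last A, hd B} = lift e'"
      using lifted_walk_junction[of ls "port v e" v w lss' ws f] lss(2,3)
        by (simp_all add: A_def B_def e'_def)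
    have "set (walk_midedges (lift e) A (lift e')) \<inter> set (walk_midedges (lift e') B (lift f))
        \<subseteq> {lift e'}"
    proof
      fix F assume F:
          "F \<in> set (walk_midedges (lift e) A (lift e')) \<inter> set (walk_midedges (lift e') B (lift f))"
      have "set (walk_midedges (lift e) A (lift e')) \<subseteq> {lift e, lift e'} \<union> inner_edges v"
        using walk_edges_map_Pair_inner[of v ls] by (auto simp: walk_midedges_def A_def)
      with F set_walk_midedges_lifted_walk[OF lss(3), folded B_def]
        lifted_midedges_disjoint[OF Cons.prems(1), folded e'_def]
      show "F \<in> {lift e'}" by blast
    qed
    moreover have "lift e' \<in> set (walk_midedges (lift e) A (lift e'))" using A
        by (simp add: walk_midedges_def)
    moreover have "set A \<inter> set B = {}"
      using saw(3) fst_set_lifted_walk[of vs lss'] by (force simp: A_def B_def)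
    ultimately show ?thesis
      using saw_append[OF A B(1)] B(2) sawA Cons.IH[OF saw(6) lss(3), folded B_def] walk
        start_in_walk_midedges[of "lift e'" B "lift f"] by auto
  qed
qed

lemma saw_E1_liftedE:
  assumes "saw E1 (lift e) ws (lift f)" "e \<in> E" "f \<in> E"
  obtains vs lss where "ws = lifted_walk vs lss" "saw E e vs f"
      "lss \<in> listset (crossing_walks e vs f)"
  using assms
proof (induction "length ws" arbitrary: ws e thesis rule: less_induct)
  case less
  show ?case
  proof (cases "ws = []")
    case True
    with less.prems show ?thesis using less.prems(1)[of "[]" "[]"] by (auto simp: saw_Nil)
  next
    case False
    obtain v ls B where ws: "ws = map (Pair v) ls @ B" "ls \<noteq> []"
      and leave: "B \<noteq> [] \<Longrightarrow> fst (hd B) \<noteq> v"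
      using split_first_block[OF False] by metis
    show ?thesis
    proof (cases "B = []")
      case True
      then have "ls \<in> gadget_walks K EH (port v e) (port v f)" "v \<in> e" "v \<in> f" "e \<noteq> f"
        using saw_map_Pair_iff[OF less.prems(3,4) ws(2)] less.prems(2) ws(1) by auto
      then show ?thesis
        using less.prems(1)[of "[v]" "[ls]"] less.prems(3,4) ws True
        by (simp add: saw_Cons saw_Nil mem_set_Cons_iff)
    next
      case False
      obtain u where u: "{v, u} \<in> E" "fst (hd B) = u"
          "saw E1 (lift e) (map (Pair v) ls) (lift {v, u})"
        "saw E1 (lift {v, u}) B (lift f)"
        "set (walk_midedges (lift e) (map (Pair v) ls) (lift {v, u})) \<inter>
           set (walk_midedges (lift {v, u}) B (lift f)) = {lift {v, u}}"
        using saw_E1_leave_gadgetE[OF less.prems(2)[unfolded ws(1)] ws(2) False leave[OF False]] .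
      define e' where "e' = {v, u}"
      have block: "ls \<in> gadget_walks K EH (port v e) (port v e')" "v \<in> e" "e \<noteq> e'"
        using saw_map_Pair_iff[OF less.prems(3) u(1) ws(2)] u(3) by (auto simp: e'_def)
      obtain vs lss where B: "B = lifted_walk vs lss" "saw E e' vs f"
          "lss \<in> listset (crossing_walks e' vs f)"
        using less.hyps[of B e'] ws(1,2) u(1,4) less.prems(4) by (auto simp: e'_def)
      have vs: "vs \<noteq> []" "hd vs = u" using fst_hd_lifted_walk[OF B(3)] B(1) False u(2) by auto
      then have exit: "exit_midedge v vs f = e'" by (cases vs) (simp_all add: e'_def)
      have e_notin: "e \<notin> set (walk_midedges e' vs f)"
      proof
        assume "e \<in> set (walk_midedges e' vs f)"
        then have "lift e \<in> set (walk_midedges (lift e') B (lift f))"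
          using set_walk_midedges_lifted_walk[OF B(3)] B(1) by blast
        then have "lift e \<in> {lift e'}"
          using u(5) start_in_walk_midedges[of "lift e" "map (Pair v) ls" "lift e'"]
          unfolding e'_def by blast
        then show False using block(3) by simp
      qed
      have "v \<notin> set vs"
        using saw_not_revisiting[OF B(2) less.prems(3) block(2) _ block(3) e_notin]
          vs u(2) leave[OF False] by (simp add: e'_def)
      then have "saw E e (v # vs) f"
        using less.prems(3) block(2) e_notin B(2) by (simp add: saw_Cons exit e'_def)
      moreover have "ls # lss \<in> listset (crossing_walks e (v # vs) f)"
        using block(1) B(3) by (simp add: exit mem_set_Cons_iff)
      ultimately show ?thesis using less.prems(1)[of "v # vs" "ls # lss"] ws(1) B(1) by simp
    qed
  qed
qed

lemma sum_crossing_walks: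
  assumes "0 \<le> x" "saw E e vs f"
  shows "(\<Sum>lss\<in>listset (crossing_walks e vs f). ennreal x ^ length (lifted_walk vs lss)) =
    ennreal (gadget_weight K EH w1 w2 x) ^ length vs"
proof -
  note ports = crossing_walks_between_ports[OF assms(2)]
  have "(\<Sum>lss\<in>listset (crossing_walks e vs f). ennreal x ^ length (lifted_walk vs lss)) =
      (\<Sum>lss\<in>listset (crossing_walks e vs f). prod_list (map (\<lambda>ls. ennreal x ^ length ls) lss))"
  proof (rule sum.cong)
    fix lss assume "lss \<in> listset (crossing_walks e vs f)"
    then have "length (lifted_walk vs lss) = sum_list (map length lss)"
      using listset_crossing_walksD length_lifted_walk by blast
    then show "ennreal x ^ length (lifted_walk vs lss) =
        prod_list (map (\<lambda>ls. ennreal x ^ length ls) lss)"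
      by (simp add: power_sum_list o_def)
  qed simp
  also have "\<dots> = prod_list (map (\<lambda>A. \<Sum>ls\<in>A. ennreal x ^ length ls) (crossing_walks e vs f))"
    using finite_crossing_walks by (rule sum_listset_prod_list)
  also have "\<dots> = prod_list (map (\<lambda>A. ennreal (gadget_weight K EH w1 w2 x)) (crossing_walks e vs f))"
  proof (rule arg_cong[where f = prod_list], rule map_cong[OF refl])
    fix A assume "A \<in> set (crossing_walks e vs f)"
    then obtain p q where pq: "A = gadget_walks K EH p q" "p \<in> Ports" "q \<in> Ports" "p \<noteq> q"
      using ports by blast
    have "(\<Sum>ls\<in>A. ennreal x ^ length ls) = ennreal (gadget_weight K EH p q x)"
      using assms(1) by (simp add: pq(1) gadget_weight_def ennreal_power sum_ennreal)
    also have "\<dots> = ennreal (gadget_weight K EH w1 w2 x)"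
      using gadget_weight_ports_eq[OF gadget assms(1) pq(2-4)] by simp
    finally show "(\<Sum>ls\<in>A. ennreal x ^ length ls) = ennreal (gadget_weight K EH w1 w2 x)" .
  qed
  finally show ?thesis using ports by (simp add: map_replicate_const)
qed

lemma bij_betw_lifted_walks:
  assumes "X \<subseteq> E"
  shows "bij_betw (\<lambda>((e, vs, f), lss). (lift e, lifted_walk vs lss, lift f))
    (SIGMA (e, vs, f):{(e, vs, f) \<in> saw_gen E. e \<in> X}. listset (crossing_walks e vs f))
    {(e, vs, f) \<in> saw_gen E1. e \<in> lift ` X \<and> f \<in> lift ` E}"
proof (rule bij_betw_imageI)
  show "inj_on (\<lambda>((e, vs, f), lss). (lift e, lifted_walk vs lss, lift f))
    (SIGMA (e, vs, f):{(e, vs, f) \<in> saw_gen E. e \<in> X}. listset (crossing_walks e vs f))"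
  proof (rule inj_onI, clarsimp simp: saw_gen_def)
    fix e vs f lss e' vs' f' lss'
    assume "saw E e vs f" "lss \<in> listset (crossing_walks e vs f)"
      "saw E e' vs' f'" "lss' \<in> listset (crossing_walks e' vs' f')"
      "lifted_walk vs lss = lifted_walk vs' lss'"
    then show "vs = vs' \<and> lss = lss'"
      using lifted_walk_inj saw_distinctD listset_crossing_walksD by metis
  qed
  show "(\<lambda>((e, vs, f), lss). (lift e, lifted_walk vs lss, lift f)) `
      (SIGMA (e, vs, f):{(e, vs, f) \<in> saw_gen E. e \<in> X}. listset (crossing_walks e vs f)) =
    {(e, vs, f) \<in> saw_gen E1. e \<in> lift ` X \<and> f \<in> lift ` E}"
  proof (intro equalityI subsetI)
    fix \<pi> assume "\<pi> \<in> {(e, vs, f) \<in> saw_gen E1. e \<in> lift ` X \<and> f \<in> lift ` E}"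
    then obtain e f ws where \<pi>: "\<pi> = (lift e, ws, lift f)" "saw E1 (lift e) ws (lift f)" "e \<in> X"
        "f \<in> E"
      by (auto simp: saw_gen_def)
    then obtain vs lss where "ws = lifted_walk vs lss" "saw E e vs f"
        "lss \<in> listset (crossing_walks e vs f)"
      using saw_E1_liftedE assms by blast
    with \<pi> show "\<pi> \<in> (\<lambda>((e, vs, f), lss). (lift e, lifted_walk vs lss, lift f)) `
      (SIGMA (e, vs, f):{(e, vs, f) \<in> saw_gen E. e \<in> X}. listset (crossing_walks e vs f))"
      by (force simp: saw_gen_def)
  qed (use saw_lifted_walk saw_endD in \<open>force simp: saw_gen_def\<close>)
qed

lemma walk_series_lifted:
  assumes "X \<subseteq> E" "0 \<le> x"
  shows "walk_series {(e, vs, f) \<in> saw_gen E. e \<in> X} (gadget_weight K EH w1 w2 x) =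
    walk_series {(e, vs, f) \<in> saw_gen E1. e \<in> lift ` X \<and> f \<in> lift ` E} x"
proof -
  let ?S0 = "{(e, vs, f) \<in> saw_gen E. e \<in> X}"
  let ?fibre = "\<lambda>(e, vs, f). listset (crossing_walks e vs f)"
  have finite: "finite (?fibre \<sigma>)" for \<sigma>
    using finite_listset[OF finite_crossing_walks] by (simp add: case_prod_beta')
  have "walk_series {(e, vs, f) \<in> saw_gen E1. e \<in> lift ` X \<and> f \<in> lift ` E} x =
      (\<Sum>\<^sub>\<infinity>((e, vs, f), lss)\<in>Sigma ?S0 ?fibre. ennreal x ^ length (lifted_walk vs lss))"
    unfolding walk_series_def bij_betw_imp_surj_on[OF bij_betw_lifted_walks[OF assms(1)], symmetric]
    by (subst infsum_reindex[OF bij_betw_imp_inj_on[OF bij_betw_lifted_walks[OF assms(1)]]])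
      (simp add: o_def case_prod_beta')
  also have "\<dots> = (\<Sum>\<^sub>\<infinity>(e, vs, f)\<in>?S0. \<Sum>lss\<in>listset (crossing_walks e vs f).
      ennreal x ^ length (lifted_walk vs lss))"
    by (subst infsum_Sigma_ennreal[OF finite]) (simp_all add: case_prod_beta')
  also have "\<dots> = walk_series ?S0 (gadget_weight K EH w1 w2 x)"
    unfolding walk_series_def
    by (rule infsum_cong) (auto simp: saw_gen_def sum_crossing_walks[OF assms(2)])
  finally show ?thesis ..
qed

lemma saws_inside_gadget:
  assumes "a \<in> incident_edges E v" "b \<in> incident_edges E v" "a \<noteq> b"
  shows "{(e, vs, f). saw E1 e vs f \<and> e = lift a \<and> f = lift b \<and> set vs \<subseteq> {v} \<times> K} =
    (\<lambda>ls. (lift a, map (Pair v) ls, lift b)) ` gadget_walks K EH (port v a) (port v b)"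
proof (intro equalityI subsetI)
  have ab: "a \<in> E" "v \<in> a" "b \<in> E" "v \<in> b" using assms by (auto simp: incident_edges_def)
  fix \<pi>
  assume "\<pi> \<in> {(e, vs, f). saw E1 e vs f \<and> e = lift a \<and> f = lift b \<and> set vs \<subseteq> {v} \<times> K}"
  then obtain ws where \<pi>: "\<pi> = (lift a, ws, lift b)" "saw E1 (lift a) ws (lift b)"
      "set ws \<subseteq> {v} \<times> K"
    by auto
  have "map (Pair v) (map snd ws) = ws" using \<pi>(3) by (induction ws) auto
  moreover have "map snd ws \<noteq> []" using \<pi>(2) assms(3) by (auto simp: saw_Nil)
  ultimately have "map snd ws \<in> gadget_walks K EH (port v a) (port v b)"
    using saw_map_Pair_iff[OF ab(1,3)] \<pi>(2) by metis
  with \<pi>(1) \<open>map (Pair v) (map snd ws) = ws\<close>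
  show "\<pi> \<in> (\<lambda>ls. (lift a, map (Pair v) ls, lift b)) ` gadget_walks K EH (port v a) (port v b)"
    by force
next
  have ab: "a \<in> E" "v \<in> a" "b \<in> E" "v \<in> b" using assms by (auto simp: incident_edges_def)
  fix \<pi>
  assume "\<pi> \<in> (\<lambda>ls. (lift a, map (Pair v) ls, lift b)) ` gadget_walks K EH (port v a) (port v b)"
  then obtain ls where \<pi>: "\<pi> = (lift a, map (Pair v) ls, lift b)"
      "ls \<in> gadget_walks K EH (port v a) (port v b)"
    by blast
  then have "saw E1 (lift a) (map (Pair v) ls) (lift b)" "set ls \<subseteq> K"
    using saw_map_Pair_iff[OF ab(1,3)] ab assms(3) by (auto simp: gadget_walks_def)
  with \<pi>(1) show "\<pi> \<in> {(e, vs, f). saw E1 e vs f \<and> e = lift a \<and> f = lift b \<and> set vs \<subseteq> {v} \<times> K}"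
    by auto
qed

lemma gadget_series_eq_gadget_weight:
  assumes "V \<noteq> {}" "0 \<le> x"
  shows "gadget_series V E K EH port x = gadget_weight K EH w1 w2 x"
proof -
  define v where "v = (SOME v. v \<in> V)"
  have v: "v \<in> V" using assms(1) by (simp add: v_def some_in_eq)
  define P where "P = (\<lambda>(a, b). a \<in> incident_edges E v \<and> b \<in> incident_edges E v \<and> a \<noteq> b)"
  obtain a b where "(SOME ab. P ab) = (a, b)" by fastforce
  moreover have "\<exists>ab. P ab"
    using card_incident_edges[OF v] by (auto simp: P_def card_3_iff)
  ultimately have ab: "a \<in> incident_edges E v" "b \<in> incident_edges E v" "a \<noteq> b"
    using someI_ex[of P] by (auto simp: P_def)
  have "gadget_series V E K EH port x =
      (\<Sum>(e, vs, f)\<in>{(e, vs, f). saw E1 e vs f \<and> e = lift a \<and> f = lift b \<and> set vs \<subseteq> {v} \<times> K}.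
        x ^ length vs)"
    unfolding gadget_series_def Let_def v_def[symmetric] P_def[symmetric]
      \<open>(SOME ab. P ab) = (a, b)\<close> by simp
  also have "\<dots> = gadget_weight K EH (port v a) (port v b) x"
    unfolding saws_inside_gadget[OF ab]
      by (subst sum.reindex) (auto simp: inj_on_def gadget_weight_def)
  also have "\<dots> = gadget_weight K EH w1 w2 x"
    using ab port_in_Ports port_eq_iff assms(2)
    by (intro gadget_weight_ports_eq[OF gadget]) (auto simp: incident_edges_def)
  finally show ?thesis .
qed

section \<open>Walks of $G_1$ starting next to the fundamental domain\<close>

text \<open>\<open>(E', P) \<in> prefixes_to L\<close> describes a walk inside the gadget of an endpoint of the
  lifted mid-edge \<open>L\<close>: it starts at the mid-edge \<open>E'\<close> and visits the vertices \<open>P\<close> before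
  reaching \<open>L\<close>.  Extending a walk between lifted mid-edges by such a prefix and suffix gives
  its \<open>extensions\<close>.\<close>
definition prefixes_to :: "('v \<times> 'g) set \<Rightarrow> (('v \<times> 'g) set \<times> ('v \<times> 'g) list) set" where
  "prefixes_to L = insert (L, [])
     ((\<lambda>(w, h, ls). (Pair w ` h, map (Pair w) ls)) ` (fst ` L \<times> EH \<times> distinct_lists K))"

definition suffixes_from :: "('v \<times> 'g) set \<Rightarrow> (('v \<times> 'g) list \<times> ('v \<times> 'g) set) set" where
  "suffixes_from L = prod.swap ` prefixes_to L"

definition extensions ::
  "('v \<times> 'g) set \<times> ('v \<times> 'g) list \<times> ('v \<times> 'g) set \<Rightarrow>
   (('v \<times> 'g) set \<times> ('v \<times> 'g) list \<times> ('v \<times> 'g) set) set" where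
  "extensions = (\<lambda>(L, ws, L'). (\<lambda>((E', P), (S, F')). (E', P @ ws @ S, F')) `
     (prefixes_to L \<times> suffixes_from L'))"

lemma prefixes_to_rev:
  assumes "(E', P) \<in> prefixes_to L" shows "(E', rev P) \<in> prefixes_to L"
proof -
  consider "P = []"
    | w h ls where "(w, h, ls) \<in> fst ` L \<times> EH \<times> distinct_lists K" "E' = Pair w ` h"
        "P = map (Pair w) ls"
    using assms by (auto simp: prefixes_to_def)
  then show ?thesis
  proof cases
    case 2
    then have "(w, h, rev ls) \<in> fst ` L \<times> EH \<times> distinct_lists K" by (simp add: rev_distinct_lists)
    with 2 show ?thesis unfolding prefixes_to_def by (intro insertI2 image_eqI[where x =
        "(w, h, rev ls)"]) (simp_all add: rev_map)
  qed (use assms in simp)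
qed

lemma card_prefixes_to:
  assumes "e \<in> E"
  shows "finite (prefixes_to (lift e))"
      "card (prefixes_to (lift e)) \<le> 1 + 2 * card EH * card (distinct_lists K)"
proof -
  have e: "finite e" "card e \<le> 2" using assms by (auto elim: edgeE)
  let ?I = "fst ` lift e \<times> EH \<times> distinct_lists K"
  have "finite ?I" using e finite_EH finite_distinct_lists[OF finite_K] by simp
  then show "finite (prefixes_to (lift e))" by (simp add: prefixes_to_def)
  have "card (prefixes_to (lift e)) \<le>
      Suc (card ((\<lambda>(w, h, ls). (Pair w ` h, map (Pair w) ls)) ` ?I))"
    unfolding prefixes_to_def using \<open>finite ?I\<close> by (simp add: card_insert_if)
  also have "\<dots> \<le> Suc (card ?I)"
    using \<open>finite ?I\<close> by (simp add: card_image_le)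
  also have "\<dots> \<le> Suc (2 * card EH * card (distinct_lists K))"
    using e by (simp add: card_cartesian_product)
  finally show "card (prefixes_to (lift e)) \<le> 1 + 2 * card EH * card (distinct_lists K)"
    by simp
qed

lemma card_extensions:
  assumes "e \<in> E" "f \<in> E"
  shows "finite (extensions (lift e, ws, lift f))"
    "card (extensions (lift e, ws, lift f)) \<le> (1 + 2 * card EH * card (distinct_lists K)) ^ 2"
proof -
  let ?N = "1 + 2 * card EH * card (distinct_lists K)"
  have fin: "finite (prefixes_to (lift e) \<times> suffixes_from (lift f))"
    using card_prefixes_to assms by (simp add: suffixes_from_def)
  then show "finite (extensions (lift e, ws, lift f))" by (simp add: extensions_def)
  have "card (suffixes_from (lift f)) \<le> ?N"
    using card_prefixes_to[OF assms(2)] card_image_le le_trans by (metis suffixes_from_def)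
  then have "card (prefixes_to (lift e)) * card (suffixes_from (lift f)) \<le> ?N * ?N"
    using card_prefixes_to(2)[OF assms(1)] by (intro mult_le_mono)
  then have "card (prefixes_to (lift e) \<times> suffixes_from (lift f)) \<le> ?N * ?N"
    by (simp only: card_cartesian_product)
  moreover have "card (extensions (lift e, ws, lift f)) \<le>
      card (prefixes_to (lift e) \<times> suffixes_from (lift f))"
    unfolding extensions_def prod.case by (rule card_image_le[OF fin])
  ultimately show "card (extensions (lift e, ws, lift f)) \<le> ?N ^ 2"
    unfolding power2_eq_square by (rule le_trans[rotated])
qed

lemma length_prefixes_to: "(E', P) \<in> prefixes_to L \<Longrightarrow> length P \<le> card K"
  using length_le_card_if_distinct_lists[OF finite_K] by (auto simp: prefixes_to_def)

lemma length_extensions: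
  assumes "(E', ws', F') \<in> extensions (L, ws, L')"
  obtains p s where "p \<le> card K" "s \<le> card K" "length ws' = p + length ws + s"
proof -
  from assms obtain P S where "(E', P) \<in> prefixes_to L" "(F', S) \<in> prefixes_to L'"
      "ws' = P @ ws @ S"
    by (auto simp: extensions_def suffixes_from_def)
  with that[of "length P" "length S"] show thesis using length_prefixes_to by simp
qed

lemma saw_E1_inside_gadget:
  assumes saw: "saw E1 E' ws F'" and E': "E' \<in> inner_edges w"
    and avoid: "set (walk_midedges E' ws F') \<inter> lift ` E = {}"
  shows "set ws \<subseteq> {w} \<times> K \<and> F' \<in> inner_edges w"
proof (cases "ws = []")
  case False
  then obtain u ls B where ws: "ws = map (Pair u) ls @ B" "ls \<noteq> []" and leave:
      "B \<noteq> [] \<Longrightarrow> fst (hd B) \<noteq> u"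
    using split_first_block by metis
  have "hd ws \<in> E'" using saw False by (simp add: saw_def)
  then have "(u, hd ls) \<in> E'" using ws by (simp add: hd_map)
  then have "u = w" using fst_inner_edge[OF E'] by force
  have B: "B = []"
  proof (rule ccontr)
    assume "B \<noteq> []"
    then obtain u' where "{u, u'} \<in> E"
      "set (walk_midedges E' ws F') = set (walk_midedges E' (map (Pair u) ls) (lift {u, u'})) \<union>
         set (walk_midedges (lift {u, u'}) B F')"
      using saw_E1_leave_gadgetE[OF saw[unfolded ws(1)] ws(2) _ leave] ws(1) by metis
    then show False using avoid start_in_walk_midedges by blast
  qed
  have "set ws \<subseteq> V \<times> K" by (rule saw_E1_vertices[OF saw])
  then have inside: "set ws \<subseteq> {w} \<times> K" using ws B \<open>u = w\<close> by auto
  have "F' \<notin> lift ` E" using avoid False by (auto simp: walk_midedges_def)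
  then obtain u' a b where F': "F' = {(u', a), (u', b)}"
    using inner_E1E saw_endD[OF saw] by metis
  have "last ws \<in> F'" using saw False by (simp add: saw_def)
  then have "u' = w" using ws B \<open>u = w\<close> F' \<open>ls \<noteq> []\<close> by (auto simp: last_map)
  with inside F' show ?thesis by simp
qed (use saw E' in \<open>simp add: saw_Nil\<close>)

lemma saw_E1_prefixE:
  assumes saw: "saw E1 E' ws F'" and lifted: "\<exists>e\<in>E. lift e \<in> set (walk_midedges E' ws F')"
  obtains e P R where "e \<in> E" "fst ` E' \<subseteq> e" "ws = P @ R" "(E', P) \<in> prefixes_to (lift e)"
    "saw E1 (lift e) R F'"
proof (cases "E' \<in> lift ` E")
  case True
  then obtain e where "e \<in> E" "E' = lift e" by blast
  with that[of e "[]" ws] saw show thesis by (simp add: prefixes_to_def)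
next
  case False
  then obtain w a b where wab: "w \<in> V" "{a, b} \<in> EH" "E' = {(w, a), (w, b)}"
    using inner_E1E saw_startD[OF saw] by metis
  have ws: "ws \<noteq> []" using lifted False by (auto simp: walk_midedges_def)
  then obtain u ls B where split: "ws = map (Pair u) ls @ B" "ls \<noteq> []" and leave:
      "B \<noteq> [] \<Longrightarrow> fst (hd B) \<noteq> u"
    using split_first_block by metis
  have "hd ws \<in> E'" using saw ws by (simp add: saw_def)
  then have "u = w" using split wab(3) by (auto simp: hd_map)
  have "ls \<in> distinct_lists K"
    using saw_E1_vertices[OF saw] saw_distinctD[OF saw] split
    by (auto simp: distinct_lists_def distinct_map inj_on_def)
  then have prefix: "(E', map (Pair w) ls) \<in> prefixes_to (lift e)" if "w \<in> e" for e
    unfolding prefixes_to_def using that wab by (intro insertI2 image_eqI[where x =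
      "(w, {a, b}, ls)"]) auto
  have fst_E': "fst ` E' \<subseteq> e" if "w \<in> e" for e using that wab(3) by simp
  show thesis
  proof (cases "B = []")
    case True
    have "set (walk_edges ws) \<inter> lift ` E = {}"
      using walk_edges_map_Pair_inner[of w ls] lift_notin_inner_edges split True \<open>u = w\<close> by auto
    then obtain e where e: "e \<in> E" "F' = lift e"
      using lifted False ws by (auto simp: walk_midedges_def)
    have "last ws \<in> F'" using saw ws by (simp add: saw_def)
    then have "w \<in> e" using split True \<open>u = w\<close> e(2) by (auto simp: last_map mem_lift)
    with that[of e "map (Pair w) ls" "[]"] show thesis
      using e split True \<open>u = w\<close> prefix fst_E' lift_in_E1 by (simp add: saw_Nil)
  next
    case False
    then obtain u' where "{u, u'} \<in> E" "saw E1 (lift {u, u'}) B F'"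
      using saw_E1_leave_gadgetE[OF saw[unfolded split(1)] split(2) False leave] by metis
    with that[of "{w, u'}" "map (Pair w) ls" B] show thesis
      using split prefix fst_E' \<open>u = w\<close> by simp
  qed
qed

lemma saw_E1_suffixE:
  assumes saw: "saw E1 E' ws F'" and lifted: "\<exists>e\<in>E. lift e \<in> set (walk_midedges E' ws F')"
  obtains f R S where "f \<in> E" "ws = R @ S" "(S, F') \<in> suffixes_from (lift f)" "saw E1 E' R (lift f)"
proof -
  have "\<exists>e\<in>E. lift e \<in> set (walk_midedges F' (rev ws) E')"
    using lifted set_walk_midedges_rev[OF saw] by simp
  then obtain f P R where "f \<in> E" "rev ws = P @ R" "(F', P) \<in> prefixes_to (lift f)"
    "saw E1 (lift f) R E'"
    using saw_E1_prefixE[OF saw_rev[OF saw]] by metis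
  moreover from this(3) have "(rev P, F') \<in> suffixes_from (lift f)"
    using prefixes_to_rev by (force simp: suffixes_from_def)
  ultimately show thesis
    using that[of f "rev R" "rev P"] saw_rev by (metis rev_append rev_rev_ident)
qed

lemma saw_E1_extensionE:
  assumes saw: "saw E1 E' ws F'" and lifted: "\<exists>e\<in>E. lift e \<in> set (walk_midedges E' ws F')"
  obtains e M f where "e \<in> E" "f \<in> E" "fst ` E' \<subseteq> e" "saw E1 (lift e) M (lift f)"
    "(E', ws, F') \<in> extensions (lift e, M, lift f)"
proof -
  obtain e P R where e: "e \<in> E" "fst ` E' \<subseteq> e" "ws = P @ R" "(E', P) \<in> prefixes_to (lift e)"
    "saw E1 (lift e) R F'"
    using saw_E1_prefixE[OF saw lifted] by metis
  moreover obtain f M S where "f \<in> E" "R = M @ S" "(S, F') \<in> suffixes_from (lift f)"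
    "saw E1 (lift e) M (lift f)"
    using saw_E1_suffixE[OF e(5)] e(1) start_in_walk_midedges by metis
  moreover from calculation have "(E', ws, F') \<in> extensions (lift e, M, lift f)"
    unfolding extensions_def by (auto intro!: image_eqI[where x = "((E', P), (S, F'))"])
  ultimately show thesis using that by blast
qed

lemma finite_saws_avoiding_lifts:
  assumes "finite W"
  shows "finite {(E', ws, F') \<in> saw_gen E1. E' \<inter> (W \<times> K) \<noteq> {} \<and>
    set (walk_midedges E' ws F') \<inter> lift ` E = {}}" (is "finite ?S")
proof (rule finite_subset)
  let ?I = "(\<lambda>(w, h). Pair w ` h) ` (W \<times> EH)"
  show "finite (?I \<times> distinct_lists (W \<times> K) \<times> ?I)"
    using assms finite_EH finite_K by (simp add: finite_distinct_lists)
  show "?S \<subseteq> ?I \<times> distinct_lists (W \<times> K) \<times> ?I"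
  proof
    fix \<pi> assume "\<pi> \<in> ?S"
    then obtain E' ws F' where \<pi>: "\<pi> = (E', ws, F')" and saw: "saw E1 E' ws F'"
      and W: "E' \<inter> (W \<times> K) \<noteq> {}" and avoid: "set (walk_midedges E' ws F') \<inter> lift ` E = {}"
      by (auto simp: saw_gen_def)
    have "E' \<notin> lift ` E" using avoid start_in_walk_midedges by blast
    then obtain w a b where wab: "{a, b} \<in> EH" "E' = {(w, a), (w, b)}"
      using inner_E1E saw_startD[OF saw] by metis
    then have "w \<in> W" using W by auto
    have inside: "set ws \<subseteq> {w} \<times> K" "F' \<in> inner_edges w"
      using saw_E1_inside_gadget[OF saw _ avoid] wab by auto
    have "F' \<notin> lift ` E" using inside(2) lift_notin_inner_edges by blast
    then obtain u c d where ucd: "{c, d} \<in> EH" "F' = {(u, c), (u, d)}"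
      using inner_E1E saw_endD[OF saw] by metis
    then have "u = w" using fst_inner_edge[OF inside(2)] by simp
    have "E' \<in> ?I" using wab \<open>w \<in> W\<close> by (intro image_eqI[where x = "(w, {a, b})"]) auto
    moreover have "F' \<in> ?I" using ucd \<open>w \<in> W\<close> \<open>u = w\<close> by (intro image_eqI[where x =
        "(w, {c, d})"]) auto
    moreover have "ws \<in> distinct_lists (W \<times> K)"
      using inside(1) \<open>w \<in> W\<close> saw_distinctD[OF saw] by (auto simp: distinct_lists_def)
    ultimately show "\<pi> \<in> ?I \<times> distinct_lists (W \<times> K) \<times> ?I" by (simp add: \<pi>)
  qed
qed

lemma walk_series_visiting_lifts_le:
  assumes "0 < x"
  defines "N \<equiv> (1 + 2 * card EH * card (distinct_lists K)) ^ 2"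
  shows "walk_series {(E', ws, F') \<in> saw_gen E1. E' \<inter> (W \<times> K) \<noteq> {} \<and>
      set (walk_midedges E' ws F') \<inter> lift ` E \<noteq> {}} x \<le>
    ennreal (real N * max 1 x ^ (2 * card K)) *
    walk_series {(e, vs, f) \<in> saw_gen E1. e \<in> lift ` {e \<in> E. e \<inter> W \<noteq> {}} \<and> f \<in> lift ` E} x"
proof -
  define R where "R = {(E', ws, F') \<in> saw_gen E1. E' \<inter> (W \<times> K) \<noteq> {} \<and>
    set (walk_midedges E' ws F') \<inter> lift ` E \<noteq> {}}"
  define S where "S = {(e, vs, f) \<in> saw_gen E1. e \<in> lift ` {e \<in> E. e \<inter> W \<noteq> {}} \<and> f \<in> lift ` E}"
  define h where "h \<pi> = (SOME \<tau>. \<tau> \<in> S \<and> \<pi> \<in> extensions \<tau>)" for \<pi>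
  have h: "h \<pi> \<in> S \<and> \<pi> \<in> extensions (h \<pi>)" if R: "\<pi> \<in> R" for \<pi>
  proof -
    obtain E' ws F' where \<pi>: "\<pi> = (E', ws, F')" "saw E1 E' ws F'" "E' \<inter> (W \<times> K) \<noteq> {}"
      "\<exists>e\<in>E. lift e \<in> set (walk_midedges E' ws F')"
      using R by (auto simp: R_def saw_gen_def)
    then obtain e M f where "e \<in> E" "f \<in> E" "fst ` E' \<subseteq> e" "saw E1 (lift e) M (lift f)"
      "\<pi> \<in> extensions (lift e, M, lift f)"
      using saw_E1_extensionE by metis
    moreover from this(3) \<pi>(3) have "e \<inter> W \<noteq> {}" by force
    ultimately have "\<exists>\<tau>. \<tau> \<in> S \<and> \<pi> \<in> extensions \<tau>"
      by (intro exI[of _ "(lift e, M, lift f)"]) (auto simp: S_def saw_gen_def)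
    then show ?thesis unfolding h_def by (rule someI_ex)
  qed
  have "walk_series R x \<le> of_nat N * ennreal (max 1 x ^ (2 * card K)) * walk_series S x"
    unfolding walk_series_def
  proof (rule infsum_le_fibrewise)
    show "h ` R \<subseteq> S" using h by blast
  next
    fix \<tau> assume "\<tau> \<in> S"
    then obtain e M f where \<tau>: "\<tau> = (lift e, M, lift f)" "e \<in> E" "f \<in> E"
      by (auto simp: S_def saw_gen_def)
    have "{\<pi> \<in> R. h \<pi> = \<tau>} \<subseteq> extensions \<tau>" using h by blast
    then show "finite {\<pi> \<in> R. h \<pi> = \<tau>} \<and> card {\<pi> \<in> R. h \<pi> = \<tau>} \<le> N"
      using card_extensions[OF \<tau>(2,3), of M] \<tau>(1) unfolding N_def
      by (meson card_mono finite_subset le_trans)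
  next
    fix \<pi> assume "\<pi> \<in> R"
    then have "\<pi> \<in> extensions (h \<pi>)" using h by blast
    then obtain p s where "p \<le> card K" "s \<le> card K"
      "length (fst (snd \<pi>)) = p + length (fst (snd (h \<pi>))) + s"
      using length_extensions by (metis prod.collapse)
    then show "ennreal x ^ length (fst (snd \<pi>)) \<le>
        ennreal (max 1 x ^ (2 * card K)) * ennreal x ^ length (fst (snd (h \<pi>)))"
      using ennreal_power_add_le[of x] assms(1) by simp
  qed
  also have "of_nat N * ennreal (max 1 x ^ (2 * card K)) =
      ennreal (real N * max 1 x ^ (2 * card K))"
    by (simp add: ennreal_mult' ennreal_of_nat_eq_real_of_nat)
  finally show ?thesis unfolding R_def S_def .
qed

lemma walk_series_finite_iff:
  assumes "finite W" "0 < x"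
  shows "walk_series {(e, vs, f) \<in> saw_gen E1. e \<in> {e \<in> E1. e \<inter> (W \<times> K) \<noteq> {}}} x < \<infinity> \<longleftrightarrow>
    walk_series {(e, vs, f) \<in> saw_gen E1. e \<in> lift ` {e \<in> E. e \<inter> W \<noteq> {}} \<and> f \<in> lift ` E} x < \<infinity>"
    (is "walk_series ?A x < \<infinity> \<longleftrightarrow> walk_series ?S x < \<infinity>")
proof
  have "?S \<subseteq> ?A"
  proof
    fix \<pi> assume "\<pi> \<in> ?S"
    then obtain e ws f where \<pi>: "\<pi> = (lift e, ws, lift f)" "saw E1 (lift e) ws (lift f)" "e \<in> E"
      and "e \<inter> W \<noteq> {}" by (auto simp: saw_gen_def)
    then obtain w where "w \<in> e" "w \<in> W" by blast
    then have "(w, port w e) \<in> lift e \<inter> (W \<times> K)"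
      using port_in_Ports Ports_subset_K \<open>e \<in> E\<close> by (auto simp: mem_lift)
    with \<pi> show "\<pi> \<in> ?A" using lift_in_E1 by (auto simp: saw_gen_def)
  qed
  then have "walk_series ?S x \<le> walk_series ?A x"
    unfolding walk_series_def
      by (intro infsum_mono_neutral) (auto intro: nonneg_summable_on_complete)
  then show "walk_series ?A x < \<infinity> \<Longrightarrow> walk_series ?S x < \<infinity>" by simp
next
  let ?F = "{(E', ws, F') \<in> saw_gen E1. E' \<inter> (W \<times> K) \<noteq> {} \<and>
    set (walk_midedges E' ws F') \<inter> lift ` E = {}}"
  let ?R = "{(E', ws, F') \<in> saw_gen E1. E' \<inter> (W \<times> K) \<noteq> {} \<and>
    set (walk_midedges E' ws F') \<inter> lift ` E \<noteq> {}}"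
  assume "walk_series ?S x < \<infinity>"
  then have "walk_series ?R x < \<infinity>"
    by (intro le_less_trans[OF walk_series_visiting_lifts_le[OF assms(2)]])
      (simp add: ennreal_mult_less_top)
  have split: "?A = ?F \<union> ?R" by (auto simp: saw_gen_def saw_def)
  have "walk_series ?A x = walk_series ?F x + walk_series ?R x"
    unfolding walk_series_def split
    by (rule infsum_Un_disjoint) (auto intro: nonneg_summable_on_complete)
  moreover have "walk_series ?F x < \<infinity>"
    using finite_saws_avoiding_lifts[OF assms(1)]
    by (simp add: walk_series_def power_less_top_ennreal)
  ultimately show "walk_series ?A x < \<infinity>" using \<open>walk_series ?R x < \<infinity>\<close> by simp
qed

end

theorem mainTheorem2:
  fixes V :: "'v set" and E :: "'v set set" and W :: "'v set"
    and K :: "'g set" and EH :: "'g set set" and w1 w2 w3 :: 'g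
    and port :: "'v \<Rightarrow> 'v set \<Rightarrow> 'g"
  assumes "simple_graph V E" and "infinite V" and "connected_graph V E" and "cubic V E"
    and "fundamental_domain V E W"
    and "gadget K EH w1 w2 w3"
    and "port_assignment V E {w1, w2, w3} port"
  defines "X \<equiv> {e \<in> E. e \<inter> W \<noteq> {}}"
    and "E1 \<equiv> lt_edges V E EH port"
    and "X1 \<equiv> {e \<in> lt_edges V E EH port. e \<inter> (W \<times> K) \<noteq> {}}"
  shows "(\<forall>x::real. x > 0 \<longrightarrow>
            walk_series {(e, vs, f) \<in> saw_gen E. e \<in> X} (gadget_series V E K EH port x)
          = walk_series {(e, vs, f) \<in> saw_gen E1. e \<in> lt_edge port ` X \<and> f \<in> lt_edge port ` E} x)
       \<and> (\<forall>x::real. x > 0 \<longrightarrow>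
            (walk_series {(e, vs, f) \<in> saw_gen E1. e \<in> X1} x < \<infinity>
             \<longleftrightarrow> walk_series {(e, vs, f) \<in> saw_gen E1. e \<in> lt_edge port ` X \<and> f \<in> lt_edge port ` E} x < \<infinity>))"
proof -
  interpret local_transformation V E K EH w1 w2 w3 port
    using assms(1,6,7) by unfold_locales
  have "V \<noteq> {}" using assms(2) by auto
  have "finite W" using assms(5) by (simp add: fundamental_domain_def)
  have "X \<subseteq> E" by (simp add: X_def)
  show ?thesis
    unfolding X1_def E1_def
    using walk_series_lifted[OF \<open>X \<subseteq> E\<close> less_imp_le]
      gadget_series_eq_gadget_weight[OF \<open>V \<noteq> {}\<close> less_imp_le]
      walk_series_finite_iff[OF \<open>finite W\<close>]
    by (simp add: X_def)
qed
end
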